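(* Let $d\ge1$ and $L\ge 1$ be integers and let $\Phi\in\mathbb{R}^{d\times d}$ be arbitrary. Consider the loss $$\mathcal{R}(W_1,\dots,W_L)=\tfrac12\|W_LW_{L-1}\cdots W_1-\Phi\|_F^2,\qquad W_l\in\mathbb{R}^{d\times d},$$ and discrete-time gradient descent with fixed learning rate $\eta>0$, $$W_l(t+1)=W_l(t)-\eta\nabla_l\mathcal{R}(t),\qquad l=1,\dots,L,\ t=0,1,2,\dots,$$ started from the zero-asymmetric initialization $W_l(0)=I$ for $l=1,\dots,L-1$ and $W_L(0)=0$. Let $\phi=\max\{2\|\Phi\|_F,\,3L^{-1/2},\,1\}$. If $$\eta\le\min\left\{(4L^3\phi^6)^{-1},\ (144L^2\phi^4)^{-1}\right\},$$ then $$\mathcal{R}(t)\le\left(1-\frac{\eta}{2}\right)^t\mathcal{R}(0)\qquad\text{for all } t=0,1,2,\dots$$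
   Context: For $l_2\ge l_1$ write $W_{l_2:l_1}=W_{l_2}W_{l_2-1}\cdots W_{l_1}$, and an empty product is the identity matrix $I\in\mathbb{R}^{d\times d}$. The gradient of $\mathcal{R}$ with respect to $W_l$ is $\nabla_l\mathcal{R}=W_{L:l+1}^\intercal(W_{L:1}-\Phi)W_{l-1:1}^\intercal$. $\mathcal{R}(t)$ and $\nabla_l\mathcal{R}(t)$ denote the loss and gradient evaluated at the iterate $(W_1(t),\dots,W_L(t))$. $\|\cdot\|_F$ is the Frobenius norm. *)

theory Defs
  imports "HOL-Analysis.Analysis"
begin

type_synonym 'n mat = "real ^ 'n ^ 'n"

definition frob :: "'n::finite mat \<Rightarrow> real" where
  "frob A = sqrt (\<Sum>i\<in>UNIV. \<Sum>j\<in>UNIV. (A $ i $ j)^2)"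

text \<open>Ordered product W_{l2} W_{l2-1} ... W_{l1}; identity when l2 < l1.\<close>
definition prodW :: "(nat \<Rightarrow> 'n::finite mat) \<Rightarrow> nat \<Rightarrow> nat \<Rightarrow> 'n mat" where
  "prodW W l2 l1 = foldr (\<lambda>A B. A ** B) (map W (rev [l1..<Suc l2])) (mat 1)"

definition loss :: "nat \<Rightarrow> 'n::finite mat \<Rightarrow> (nat \<Rightarrow> 'n mat) \<Rightarrow> real" where
  "loss L Phi W = (1/2) * (frob (prodW W L 1 - Phi))^2"

definition grad :: "nat \<Rightarrow> 'n::finite mat \<Rightarrow> (nat \<Rightarrow> 'n mat) \<Rightarrow> nat \<Rightarrow> 'n mat" where
  "grad L Phi W l =
     transpose (prodW W L (l+1)) ** (prodW W L 1 - Phi) ** transpose (prodW W (l-1) 1)"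

text \<open>Gradient descent iterates from zero-asymmetric initialization
  (W_l(0) = I for l < L, W_L(0) = 0). Only indices 1..L are meaningful.\<close>
primrec gd :: "real \<Rightarrow> nat \<Rightarrow> 'n::finite mat \<Rightarrow> nat \<Rightarrow> nat \<Rightarrow> 'n mat" where
  "gd eta L Phi 0 = (\<lambda>l. if l = L then 0 else mat 1)"
| "gd eta L Phi (Suc t) = (\<lambda>l. gd eta L Phi t l - eta *\<^sub>R grad L Phi (gd eta L Phi t) l)"

end

theory Submission
  imports Defs
begin

text \<open>Gradient descent keeps the factors approximately balanced: since
  \<open>W\<^sub>l\<^sub>+\<^sub>1\<^sup>T \<nabla>\<^sub>l\<^sub>+\<^sub>1 = \<nabla>\<^sub>l W\<^sub>l\<^sup>T\<close>, one step changes
  \<open>W\<^sub>l W\<^sub>l\<^sup>T - W\<^sub>l\<^sub>+\<^sub>1\<^sup>T W\<^sub>l\<^sub>+\<^sub>1\<close> only by \<open>\<eta>\<^sup>2\<close> times squared gradient norms, so these matrices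
  stay within a drift \<open>\<rho>\<close> of their initial values \<open>I\<close> (for \<open>l = L - 1\<close>) and \<open>0\<close>.
  Near balancedness controls the spectra: with \<open>a = \<parallel>W\<^sub>L\<parallel>\<^sup>2\<close>, the hidden factors have singular values
  between \<open>\<surd>(1 - \<rho>)\<close> and \<open>\<surd>(1 + a + \<rho>)\<close>, and \<open>a (1 + a - \<rho>)\<^bsup>L-1\<^esup> \<le> \<parallel>W\<^sub>L\<^sub>:\<^sub>1\<parallel>\<^sup>2 \<le> \<phi>\<^sup>2\<close>
  bounds \<open>a\<close>. Hence \<open>W\<^sub>L\<^sub>-\<^sub>1\<^sub>:\<^sub>1\<close> is well conditioned, the first-order change of the end-to-end
  matrix already decreases the residual \<open>E = W\<^sub>L\<^sub>:\<^sub>1 - \<Phi>\<close> at rate \<open>\<langle>E, F\<rangle> \<ge> 47/48 \<parallel>E\<parallel>\<^sup>2\<close>, and the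
  remaining terms of the product expansion are \<open>O(\<eta>\<^sup>2)\<close>; so each step contracts \<open>\<parallel>E\<parallel>\<^sup>2\<close> by
  \<open>1 - \<eta> / 2\<close>. The induction closes because the geometric decay of the gradients keeps the
  accumulated drift below \<open>1/(48 L)\<close>.\<close>

declare transpose_matrix_vector [simp del] vector_transpose_matrix [simp del]

section \<open>Operator and Frobenius norms of matrices\<close>

definition opnorm :: "real^'n::finite^'m::finite \<Rightarrow> real" where
  "opnorm A = onorm ((*v) A)"

lemma opnorm_bound: "norm (A *v x) \<le> opnorm A * norm x"
  unfolding opnorm_def by (rule onorm) simp

lemma opnorm_nonneg: "0 \<le> opnorm A"
  unfolding opnorm_def by (rule onorm_pos_le) simp

lemma opnorm_le: "(\<And>x. norm (A *v x) \<le> c * norm x) \<Longrightarrow> opnorm A \<le> c"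
  unfolding opnorm_def by (rule onorm_le)

lemma opnorm_mult: "opnorm (A ** B) \<le> opnorm A * opnorm B"
proof -
  have "(*v) (A ** B) = (*v) A \<circ> (*v) B"
    by (auto simp: matrix_vector_mul_assoc)
  then show ?thesis
    unfolding opnorm_def by (simp add: onorm_compose)
qed

lemma opnorm_mult3: "opnorm (A ** B ** C) \<le> opnorm A * opnorm B * opnorm C"
  by (meson mult_right_mono opnorm_mult opnorm_nonneg order_trans)

lemma opnorm_add: "opnorm (A + B) \<le> opnorm A + opnorm B"
proof -
  have "(*v) (A + B) = (\<lambda>x. A *v x + B *v x)"
    by (auto simp: matrix_vector_mult_add_rdistrib)
  then show ?thesis
    unfolding opnorm_def by (simp add: onorm_triangle)
qed

lemma opnorm_scaleR: "opnorm (c *\<^sub>R A) = \<bar>c\<bar> * opnorm A"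
proof -
  have "(*v) (c *\<^sub>R A) = (\<lambda>x. c *\<^sub>R (A *v x))"
    by (auto simp: scaleR_matrix_vector_assoc)
  then show ?thesis
    unfolding opnorm_def by (simp add: onorm_scaleR)
qed

lemma opnorm_diff_scaleR:
  "0 \<le> c \<Longrightarrow> opnorm (A - c *\<^sub>R B) \<le> opnorm A + c * opnorm B"
  using opnorm_add[of A "(- c) *\<^sub>R B"] opnorm_scaleR[of "- c" B] by simp

lemma opnorm_mat_1 [simp]: "opnorm (mat 1 :: real^'n::finite^'n) = 1"
proof -
  have "(*v) (mat 1 :: real^'n^'n) = (\<lambda>x. x)"
    by auto
  then show ?thesis
    unfolding opnorm_def by (simp add: onorm_id)
qed

lemma opnorm_0 [simp]: "opnorm 0 = 0"
  by (rule antisym[OF opnorm_le opnorm_nonneg]) simp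

lemma opnorm_sum:
  fixes f :: "'a \<Rightarrow> real^'n::finite^'m::finite"
  shows "opnorm (sum f S) \<le> (\<Sum>i\<in>S. opnorm (f i))"
proof (induction S rule: infinite_finite_induct)
  case (insert x F)
  then show ?case using opnorm_add[of "f x" "sum f F"] by simp
qed simp_all

lemma inner_matrix_vector_transpose:
  fixes A :: "real^'n::finite^'m::finite"
  shows "inner (A *v x) y = inner x (transpose A *v y)"
  by (metis dot_lmul_matrix inner_commute transpose_matrix_vector)

lemma norm_transpose_matrix_vector_le: "norm (transpose A *v y) \<le> opnorm A * norm y"
proof (cases "transpose A *v y = 0")
  case False
  have "norm (transpose A *v y) ^ 2 = inner (A *v (transpose A *v y)) y"
    by (simp add: inner_matrix_vector_transpose power2_norm_eq_inner)
  also have "\<dots> \<le> norm (A *v (transpose A *v y)) * norm y"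
    by (rule norm_cauchy_schwarz)
  also have "\<dots> \<le> opnorm A * norm (transpose A *v y) * norm y"
    by (rule mult_right_mono[OF opnorm_bound]) simp
  finally show ?thesis
    using False by (simp add: power2_eq_square mult_ac)
qed (simp add: opnorm_nonneg)

lemma opnorm_transpose: "opnorm (transpose A) = opnorm A"
  by (metis antisym norm_transpose_matrix_vector_le opnorm_le transpose_transpose)

lemma frob_eq_norm: "frob A = norm A"
  unfolding frob_def norm_vec_def L2_set_def by (simp add: sum_nonneg)

lemma norm_matrix_vector_le: "norm ((A::real^'n::finite^'m::finite) *v x) \<le> norm A * norm x"
proof -
  have "(norm (A *v x))\<^sup>2 = (\<Sum>i\<in>UNIV. (inner (A$i) x)\<^sup>2)"
    by (simp add: norm_vec_def L2_set_def sum_nonneg matrix_vector_mul_component)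
  also have "\<dots> \<le> (\<Sum>i\<in>UNIV. (norm (A$i))\<^sup>2 * (norm x)\<^sup>2)"
    by (intro sum_mono) (metis Cauchy_Schwarz_ineq power_mult_distrib power2_norm_eq_inner)
  also have "\<dots> = (norm A * norm x)\<^sup>2"
    by (simp add: norm_vec_def L2_set_def sum_nonneg power_mult_distrib sum_distrib_right)
  finally show ?thesis
    by (rule power2_le_imp_le) simp
qed

lemma opnorm_le_norm: "opnorm (A::real^'n::finite^'m::finite) \<le> norm A"
  by (rule opnorm_le) (rule norm_matrix_vector_le)

lemma row_matrix_mult: "((A::real^'k::finite^'m::finite) ** (B::real^'n::finite^'k)) $ i = transpose B *v (A $ i)"
  by (simp add: vec_eq_iff matrix_matrix_mult_def matrix_vector_mult_def transpose_def mult_ac)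

lemma norm_sq_eq_sum_rows: "(norm (A::real^'n::finite^'m::finite))\<^sup>2 = (\<Sum>i\<in>UNIV. (norm (A $ i))\<^sup>2)"
  by (simp add: norm_vec_def L2_set_def sum_nonneg)

lemma norm_transpose: "norm (transpose (A::real^'n::finite^'m::finite)) = norm A"
proof -
  have "(norm (transpose A))\<^sup>2 = (norm A)\<^sup>2"
    by (simp add: norm_sq_eq_sum_rows norm_vec_def L2_set_def sum_nonneg transpose_def)
      (rule sum.swap)
  then show ?thesis by (simp add: power2_eq_iff_nonneg)
qed

lemma norm_matrix_mult_opnorm_right:
  "norm ((A::real^'k::finite^'m::finite) ** (B::real^'n::finite^'k)) \<le> norm A * opnorm B"
proof -
  have "(norm (A ** B))\<^sup>2 = (\<Sum>i\<in>UNIV. (norm (transpose B *v (A $ i)))\<^sup>2)"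
    by (simp add: norm_sq_eq_sum_rows row_matrix_mult)
  also have "\<dots> \<le> (\<Sum>i\<in>UNIV. (opnorm B * norm (A $ i))\<^sup>2)"
    by (intro sum_mono power_mono norm_transpose_matrix_vector_le) simp
  also have "\<dots> = (norm A * opnorm B)\<^sup>2"
    by (simp add: norm_sq_eq_sum_rows[of A] power_mult_distrib sum_distrib_left mult.commute)
  finally show ?thesis
    by (rule power2_le_imp_le) (simp add: opnorm_nonneg)
qed

lemma norm_matrix_mult_opnorm_left:
  "norm ((A::real^'k::finite^'m::finite) ** (B::real^'n::finite^'k)) \<le> opnorm A * norm B"
  using norm_matrix_mult_opnorm_right[of "transpose B" "transpose A"]
  by (simp add: matrix_transpose_mul[symmetric] norm_transpose opnorm_transpose mult.commute)

lemma norm_matrix_mult3_le: "norm (A ** B ** C) \<le> opnorm A * norm B * opnorm C"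
  by (meson mult_right_mono norm_matrix_mult_opnorm_left norm_matrix_mult_opnorm_right
      opnorm_nonneg order_trans)

lemma inner_matrix_mult_left:
  "inner (E::real^'n::finite^'m::finite) ((A::real^'k::finite^'m) ** X) = inner (transpose A ** E) X"
proof -
  have "inner E (A ** X) = (\<Sum>i\<in>UNIV. \<Sum>j\<in>UNIV. \<Sum>k\<in>UNIV. E$i$j * (A$i$k * X$k$j))"
    by (simp add: inner_vec_def matrix_matrix_mult_def sum_distrib_left)
  also have "\<dots> = (\<Sum>i\<in>UNIV. \<Sum>k\<in>UNIV. \<Sum>j\<in>UNIV. E$i$j * (A$i$k * X$k$j))"
    by (rule sum.cong[OF refl], rule sum.swap)
  also have "\<dots> = (\<Sum>k\<in>UNIV. \<Sum>j\<in>UNIV. \<Sum>i\<in>UNIV. E$i$j * (A$i$k * X$k$j))"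
    by (subst sum.swap) (rule sum.cong[OF refl], rule sum.swap)
  also have "\<dots> = inner (transpose A ** E) X"
    by (simp add: inner_vec_def matrix_matrix_mult_def transpose_def sum_distrib_left mult_ac)
  finally show ?thesis .
qed

lemma inner_matrix_mult_right:
  "inner (E::real^'n::finite^'m::finite) (X ** (B::real^'n^'k::finite)) = inner (E ** transpose B) X"
proof -
  have "inner E (X ** B) = (\<Sum>i\<in>UNIV. \<Sum>j\<in>UNIV. \<Sum>k\<in>UNIV. E$i$j * (X$i$k * B$k$j))"
    by (simp add: inner_vec_def matrix_matrix_mult_def sum_distrib_left)
  also have "\<dots> = (\<Sum>i\<in>UNIV. \<Sum>k\<in>UNIV. \<Sum>j\<in>UNIV. E$i$j * (X$i$k * B$k$j))"
    by (rule sum.cong[OF refl], rule sum.swap)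
  also have "\<dots> = inner (E ** transpose B) X"
    by (simp add: inner_vec_def matrix_matrix_mult_def transpose_def sum_distrib_left mult_ac)
  finally show ?thesis .
qed

lemma norm_sq_matrix_mult_transpose_ge:
  fixes E :: "real^'n::finite^'m::finite" and P :: "real^'n^'n"
  assumes "\<And>x. c * (norm x)\<^sup>2 \<le> (norm (P *v x))\<^sup>2"
  shows "c * (norm E)\<^sup>2 \<le> (norm (E ** transpose P))\<^sup>2"
proof -
  have "c * (norm E)\<^sup>2 = (\<Sum>i\<in>UNIV. c * (norm (E $ i))\<^sup>2)"
    by (simp add: norm_sq_eq_sum_rows[of E] sum_distrib_left)
  also have "\<dots> \<le> (\<Sum>i\<in>UNIV. (norm (P *v (E $ i)))\<^sup>2)"
    by (intro sum_mono assms)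
  also have "\<dots> = (norm (E ** transpose P))\<^sup>2"
    by (simp add: norm_sq_eq_sum_rows[of "E ** transpose P"] row_matrix_mult)
  finally show ?thesis .
qed

lemma sq_norm_le_opnorm: "(norm (A *v x))\<^sup>2 \<le> (opnorm A)\<^sup>2 * (norm x)\<^sup>2"
  by (metis norm_ge_zero opnorm_bound power_mono power_mult_distrib)

lemma sq_opnorm_le:
  assumes "0 \<le> c" "\<And>x. (norm (A *v x))\<^sup>2 \<le> c * (norm x)\<^sup>2"
  shows "(opnorm A)\<^sup>2 \<le> c"
proof -
  have "opnorm A \<le> sqrt c"
  proof (rule opnorm_le)
    fix x
    have "(norm (A *v x))\<^sup>2 \<le> (sqrt c * norm x)\<^sup>2"
      using assms by (simp add: power_mult_distrib)
    then show "norm (A *v x) \<le> sqrt c * norm x"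
      by (rule power2_le_imp_le) (simp add: assms(1))
  qed
  then show ?thesis
    using assms(1) opnorm_nonneg[of A] by (metis power_mono real_sqrt_pow2)
qed

lemma bounded_below_inverse:
  fixes M :: "real^'n::finite^'n"
  assumes c: "0 < c" and h: "\<And>x. c * (norm x)\<^sup>2 \<le> (norm (M *v x))\<^sup>2"
  obtains B where "M ** B = mat 1" "opnorm B \<le> 1 / sqrt c"
proof -
  have "inj ((*v) M)"
  proof (rule injI)
    fix y z assume "M *v y = M *v z"
    then have "c * (norm (y - z))\<^sup>2 \<le> 0"
      using h[of "y - z"] by (simp add: matrix_vector_mult_diff_distrib)
    then show "y = z" using c by (simp add: mult_le_0_iff)
  qed
  then obtain B where "B ** M = mat 1"
    using matrix_left_invertible_injective by blast
  then have right: "M ** B = mat 1"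
    using matrix_left_right_inverse by blast
  have "opnorm B \<le> 1 / sqrt c"
  proof (rule opnorm_le)
    fix y
    have "(sqrt c * norm (B *v y))\<^sup>2 \<le> (norm y)\<^sup>2"
      using h[of "B *v y"] right c by (simp add: matrix_vector_mul_assoc power_mult_distrib)
    then have "sqrt c * norm (B *v y) \<le> norm y"
      by (rule power2_le_imp_le) simp
    then show "norm (B *v y) \<le> 1 / sqrt c * norm y"
      using c by (simp add: field_simps)
  qed
  with right that show ?thesis
    by blast
qed

lemma sq_norm_ge_of_transpose:
  fixes M :: "real^'n::finite^'n"
  assumes c: "0 < c" and h: "\<And>x. c * (norm x)\<^sup>2 \<le> (norm (transpose M *v x))\<^sup>2"
  shows "c * (norm x)\<^sup>2 \<le> (norm (M *v x))\<^sup>2"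
proof -
  obtain B where "transpose M ** B = mat 1" and B_bound: "opnorm B \<le> 1 / sqrt c"
    using bounded_below_inverse[OF c h] by blast
  then have "transpose B ** M = mat 1"
    by (metis matrix_transpose_mul transpose_mat transpose_transpose)
  then have "norm x = norm (transpose B *v (M *v x))"
    by (simp add: matrix_vector_mul_assoc)
  also have "\<dots> \<le> 1 / sqrt c * norm (M *v x)"
    using opnorm_bound[of "transpose B" "M *v x"] mult_right_mono[OF B_bound, of "norm (M *v x)"]
    by (simp add: opnorm_transpose)
  finally have "(sqrt c * norm x)\<^sup>2 \<le> (norm (M *v x))\<^sup>2"
    using c by (intro power_mono) (simp_all add: field_simps)
  then show ?thesis
    using c by (simp add: power_mult_distrib)
qed

lemma opnorm_attained:
  fixes A :: "real^'n::finite^'m::finite"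
  obtains u where "norm u = 1" "norm (A *v u) = opnorm A"
proof -
  have "\<exists>u\<in>sphere (0::real^'n) 1. \<forall>y\<in>sphere 0 1. norm (A *v y) \<le> norm (A *v u)"
  proof (rule continuous_attains_sup)
    have "axis undefined 1 \<in> sphere (0::real^'n) 1" by simp
    then show "sphere (0::real^'n) 1 \<noteq> {}" by blast
    show "continuous_on (sphere 0 1) (\<lambda>y. norm (A *v y))"
      by (intro continuous_intros)
  qed simp
  then obtain u where u: "norm u = 1" "\<And>y. norm y = 1 \<Longrightarrow> norm (A *v y) \<le> norm (A *v u)"
    by auto
  have "opnorm A \<le> norm (A *v u)"
  proof (rule opnorm_le)
    fix x :: "real^'n"
    show "norm (A *v x) \<le> norm (A *v u) * norm x"
    proof (cases "x = 0")
      case False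
      have "norm (A *v ((1 / norm x) *\<^sub>R x)) \<le> norm (A *v u)"
        using False by (intro u(2)) simp
      then show ?thesis
        using False by (simp add: matrix_vector_mult_scaleR field_simps)
    qed simp
  qed
  moreover have "norm (A *v u) \<le> opnorm A"
    using opnorm_bound[of A u] u(1) by simp
  ultimately show ?thesis
    using that u(1) by simp
qed

text \<open>Since \<open>\<parallel>y\<parallel>\<^sup>2 = \<langle>M y, z\<rangle> \<le> \<parallel>M y\<parallel> \<parallel>z\<parallel>\<close>, a lower bound on \<open>\<parallel>y\<parallel>/\<parallel>z\<parallel>\<close>
  carries over to \<open>\<parallel>M y\<parallel>/\<parallel>y\<parallel>\<close>.\<close>
lemma sq_norm_ratio_transpose_image:
  fixes M :: "real^'n::finite^'n"
  assumes "y = transpose M *v z" "m * (norm z)\<^sup>2 \<le> (norm y)\<^sup>2"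
  shows "m * (norm y)\<^sup>2 \<le> (norm (M *v y))\<^sup>2"
proof (cases "m \<le> 0 \<or> z = 0")
  case True
  then show ?thesis
    using assms by (auto intro: order_trans[OF mult_nonpos_nonneg])
next
  case False
  have "(norm y)\<^sup>2 = inner (M *v y) z"
    using assms(1) by (simp add: inner_matrix_vector_transpose power2_norm_eq_inner)
  also have "\<dots> \<le> norm (M *v y) * norm z"
    by (rule norm_cauchy_schwarz)
  finally have "(norm y)\<^sup>2 \<le> norm (M *v y) * norm z" .
  then have "(norm y)\<^sup>2 * (norm y)\<^sup>2 \<le> (norm (M *v y))\<^sup>2 * (norm z)\<^sup>2"
    by (metis power2_eq_square power_mono power_mult_distrib zero_le_power2)
  moreover have "m * (norm y)\<^sup>2 * (norm z)\<^sup>2 \<le> (norm y)\<^sup>2 * (norm y)\<^sup>2"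
    using mult_right_mono[OF assms(2), of "(norm y)\<^sup>2"] by (simp add: mult_ac)
  ultimately have "m * (norm y)\<^sup>2 * (norm z)\<^sup>2 \<le> (norm (M *v y))\<^sup>2 * (norm z)\<^sup>2"
    by linarith
  then show ?thesis
    using False by simp
qed

section \<open>Products of factor matrices\<close>

lemma matrix_diff_ldistrib: "(A::real^'k::finite^'m::finite) ** (B - C) = A ** B - A ** (C::real^'n::finite^'k)"
  by (simp add: vec_eq_iff matrix_matrix_mult_def algebra_simps sum_subtractf)

lemma matrix_diff_rdistrib: "((A::real^'k::finite^'m::finite) - B) ** (C::real^'n::finite^'k) = A ** C - B ** C"
  by (simp add: vec_eq_iff matrix_matrix_mult_def algebra_simps sum_subtractf)

lemma matrix_mul_minus_right: "(A::real^'k::finite^'m::finite) ** (- B) = - (A ** (B::real^'n::finite^'k))"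
  by (simp add: vec_eq_iff matrix_matrix_mult_def sum_negf)

lemma matrix_mul_minus_left: "(- (A::real^'k::finite^'m::finite)) ** B = - (A ** (B::real^'n::finite^'k))"
  by (simp add: vec_eq_iff matrix_matrix_mult_def sum_negf)

lemma matrix_sum_ldistrib:
  "(A::real^'k::finite^'m::finite) ** sum (f::_ \<Rightarrow> real^'n::finite^'k) S = (\<Sum>i\<in>S. A ** f i)"
  by (induction S rule: infinite_finite_induct) (simp_all add: matrix_add_ldistrib)

lemma prodW_empty: "l2 < l1 \<Longrightarrow> prodW W l2 l1 = mat 1"
  by (simp add: prodW_def)

lemma prodW_single [simp]: "prodW W l l = W l"
  by (simp add: prodW_def)

lemma prodW_Suc: "l1 \<le> Suc l2 \<Longrightarrow> prodW W (Suc l2) l1 = W (Suc l2) ** prodW W l2 l1"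
  by (simp add: prodW_def)

lemma prodW_top: "l1 \<le> l2 \<Longrightarrow> 0 < l2 \<Longrightarrow> prodW W l2 l1 = W l2 ** prodW W (l2 - 1) l1"
  using prodW_Suc[of l1 "l2 - 1" W] by (cases l2) auto

lemma prodW_bottom: "l1 \<le> l2 \<Longrightarrow> prodW W l2 l1 = prodW W l2 (Suc l1) ** W l1"
proof (induction l2)
  case (Suc n)
  then show ?case
    by (cases "l1 = Suc n") (simp_all add: prodW_def prodW_Suc matrix_mul_assoc)
qed (simp add: prodW_def)

lemma opnorm_prodW_le:
  assumes "0 \<le> c" "\<And>j. l1 \<le> j \<Longrightarrow> j \<le> l2 \<Longrightarrow> opnorm (W j) \<le> c"
  shows "opnorm (prodW W l2 l1) \<le> c ^ (Suc l2 - l1)"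
  using assms(2)
proof (induction l2)
  case 0
  then show ?case by (cases "l1 = 0") (simp_all add: prodW_def)
next
  case (Suc n)
  show ?case
  proof (cases "l1 \<le> Suc n")
    case True
    have "opnorm (prodW W (Suc n) l1) \<le> opnorm (W (Suc n)) * opnorm (prodW W n l1)"
      using True by (simp add: prodW_Suc opnorm_mult)
    also have "\<dots> \<le> c * c ^ (Suc n - l1)"
      by (intro mult_mono Suc) (use True assms(1) opnorm_nonneg in auto)
    also have "\<dots> = c ^ (Suc (Suc n) - l1)"
      using True by (simp add: Suc_diff_le)
    finally show ?thesis .
  qed (simp add: prodW_empty)
qed

lemma sq_norm_prodW_ge:
  assumes "0 \<le> c" "\<And>j x. l1 \<le> j \<Longrightarrow> j \<le> l2 \<Longrightarrow> c * (norm x)\<^sup>2 \<le> (norm (W j *v x))\<^sup>2"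
  shows "c ^ (Suc l2 - l1) * (norm x)\<^sup>2 \<le> (norm (prodW W l2 l1 *v x))\<^sup>2"
  using assms(2)
proof (induction l2 arbitrary: x)
  case 0
  then show ?case by (cases "l1 = 0") (simp_all add: prodW_def)
next
  case (Suc n)
  show ?case
  proof (cases "l1 \<le> Suc n")
    case True
    have "c ^ (Suc (Suc n) - l1) * (norm x)\<^sup>2 = c * (c ^ (Suc n - l1) * (norm x)\<^sup>2)"
      using True by (simp add: Suc_diff_le)
    also have "\<dots> \<le> c * (norm (prodW W n l1 *v x))\<^sup>2"
      by (intro mult_left_mono Suc assms(1)) auto
    also have "\<dots> \<le> (norm (W (Suc n) *v (prodW W n l1 *v x)))\<^sup>2"
      using Suc.prems[of "Suc n"] True by simp
    also have "\<dots> = (norm (prodW W (Suc n) l1 *v x))\<^sup>2"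
      using True by (simp add: prodW_Suc matrix_vector_mul_assoc)
    finally show ?thesis .
  qed (simp add: prodW_empty)
qed

lemma prodW_telescope:
  assumes "1 \<le> l1" "l1 \<le> Suc l2"
  shows "prodW V l2 l1 - prodW W l2 l1 =
    (\<Sum>l\<in>{l1..l2}. prodW V l2 (Suc l) ** (V l - W l) ** prodW W (l - 1) l1)"
  using assms(2)
proof (induction l2)
  case 0
  then show ?case using assms(1) by (simp add: prodW_def)
next
  case (Suc n)
  show ?case
  proof (cases "l1 = Suc (Suc n)")
    case False
    then have le: "l1 \<le> Suc n" using Suc.prems by simp
    have "prodW V (Suc n) l1 - prodW W (Suc n) l1 =
        (V (Suc n) - W (Suc n)) ** prodW W n l1 + V (Suc n) ** (prodW V n l1 - prodW W n l1)"
      using le by (simp add: prodW_Suc matrix_diff_ldistrib matrix_diff_rdistrib)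
    also have "V (Suc n) ** (prodW V n l1 - prodW W n l1) =
        (\<Sum>l\<in>{l1..n}. prodW V (Suc n) (Suc l) ** (V l - W l) ** prodW W (l - 1) l1)"
      using le Suc.IH by (simp add: matrix_sum_ldistrib prodW_Suc matrix_mul_assoc)
    also have "{l1..Suc n} = insert (Suc n) {l1..n}"
      using le by auto
    ultimately show ?thesis by (simp add: prodW_empty)
  qed (simp add: prodW_def)
qed

section \<open>Approximate balancedness along gradient descent\<close>

lemma grad_balance:
  assumes "1 \<le> l" "Suc l \<le> L"
  shows "transpose (W (Suc l)) ** grad L Phi W (Suc l) = grad L Phi W l ** transpose (W l)"
proof -
  have top: "transpose (W (Suc l)) ** transpose (prodW W L (Suc (Suc l))) = transpose (prodW W L (Suc l))"
    using prodW_bottom[of "Suc l" L W] assms by (simp add: matrix_transpose_mul)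
  have bottom: "transpose (prodW W (l - 1) 1) ** transpose (W l) = transpose (prodW W l 1)"
    using prodW_top[of 1 l W] assms by (simp add: matrix_transpose_mul)
  show ?thesis
    unfolding grad_def using top bottom by (simp add: matrix_mul_assoc) (metis matrix_mul_assoc)
qed

lemma norm_diff_scaleR_sq:
  "(norm (a - c *\<^sub>R b))\<^sup>2 = (norm a)\<^sup>2 - 2 * c * inner a b + c\<^sup>2 * (norm (b::'a::real_inner))\<^sup>2"
  unfolding power2_norm_eq_inner
  by (simp add: inner_diff_left inner_diff_right inner_commute algebra_simps power2_eq_square)

lemma inner_transpose_quadratic: "inner x (transpose (M::real^'n::finite^'n) *v x) = inner x (M *v x)"
  by (metis inner_commute inner_matrix_vector_transpose)

text \<open>The terms linear in \<open>eta\<close> cancel by \<open>grad_balance\<close>.\<close>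
lemma balance_gradient_step:
  fixes W :: "nat \<Rightarrow> real^'n::finite^'n" and Phi :: "real^'n^'n" and eta :: real
  assumes "1 \<le> l" "Suc l \<le> L"
  defines "V \<equiv> \<lambda>j. W j - eta *\<^sub>R grad L Phi W j"
  shows "(norm (transpose (V l) *v x))\<^sup>2 - (norm (V (Suc l) *v x))\<^sup>2 =
     (norm (transpose (W l) *v x))\<^sup>2 - (norm (W (Suc l) *v x))\<^sup>2
     + eta\<^sup>2 * ((norm (transpose (grad L Phi W l) *v x))\<^sup>2 - (norm (grad L Phi W (Suc l) *v x))\<^sup>2)"
proof -
  let ?G = "grad L Phi W"
  have step_l: "transpose (V l) *v x = transpose (W l) *v x - eta *\<^sub>R (transpose (?G l) *v x)"
    by (simp add: V_def transpose_def vec_eq_iff matrix_vector_mult_def algebra_simps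
        sum_subtractf sum_distrib_left)
  have step_Suc_l: "V (Suc l) *v x = W (Suc l) *v x - eta *\<^sub>R (?G (Suc l) *v x)"
    by (simp add: V_def matrix_vector_mult_diff_rdistrib scaleR_matrix_vector_assoc)
  have cross_l: "inner (transpose (W l) *v x) (transpose (?G l) *v x) =
      inner x ((W l ** transpose (?G l)) *v x)"
    by (simp add: inner_matrix_vector_transpose matrix_vector_mul_assoc)
  have cross_Suc_l: "inner (W (Suc l) *v x) (?G (Suc l) *v x) =
      inner x ((transpose (W (Suc l)) ** ?G (Suc l)) *v x)"
    by (simp add: inner_matrix_vector_transpose matrix_vector_mul_assoc)
  have cross_eq: "inner x ((transpose (W (Suc l)) ** ?G (Suc l)) *v x) =
      inner x ((W l ** transpose (?G l)) *v x)"
    using grad_balance[OF assms(1,2), of W Phi] inner_transpose_quadratic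
    by (metis matrix_transpose_mul transpose_transpose)
  show ?thesis
    unfolding step_l step_Suc_l norm_diff_scaleR_sq cross_l cross_Suc_l cross_eq
    by (simp add: algebra_simps)
qed

text \<open>The quadratic form of \<open>W l W l\<^sup>T - W (l+1)\<^sup>T W (l+1)\<close> stays within \<open>dr l\<close> of its value at
  the zero-asymmetric initialization, which is \<open>I\<close> for \<open>l = L - 1\<close> and \<open>0\<close> otherwise.\<close>
definition nearly_balanced :: "nat \<Rightarrow> (nat \<Rightarrow> real^'n::finite^'n) \<Rightarrow> (nat \<Rightarrow> real) \<Rightarrow> bool" where
  "nearly_balanced L W dr \<longleftrightarrow> (\<forall>l x. 1 \<le> l \<longrightarrow> l < L \<longrightarrow>
     \<bar>(norm (transpose (W l) *v x))\<^sup>2 - (norm (W (Suc l) *v x))\<^sup>2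
        - (if Suc l = L then (norm x)\<^sup>2 else 0)\<bar> \<le> dr l * (norm x)\<^sup>2)"

definition drift_tail :: "nat \<Rightarrow> (nat \<Rightarrow> real) \<Rightarrow> nat \<Rightarrow> real" where
  "drift_tail L dr l = (\<Sum>k\<in>{l..<L}. dr k)"

lemma drift_tail_Suc: "l < L \<Longrightarrow> drift_tail L dr l = dr l + drift_tail L dr (Suc l)"
  unfolding drift_tail_def by (simp add: sum.atLeast_Suc_lessThan)

lemma drift_tail_nonneg: "(\<And>k. 0 \<le> dr k) \<Longrightarrow> 0 \<le> drift_tail L dr l"
  unfolding drift_tail_def by (simp add: sum_nonneg)

lemma drift_tail_antimono: "(\<And>k. 0 \<le> dr k) \<Longrightarrow> l \<le> l' \<Longrightarrow> drift_tail L dr l' \<le> drift_tail L dr l"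
  unfolding drift_tail_def by (rule sum_mono2) auto

lemma nearly_balanced_upper:
  "nearly_balanced L W dr \<Longrightarrow> 1 \<le> l \<Longrightarrow> l < L \<Longrightarrow>
   (norm (transpose (W l) *v x))\<^sup>2
     \<le> (norm (W (Suc l) *v x))\<^sup>2 + (if Suc l = L then (norm x)\<^sup>2 else 0) + dr l * (norm x)\<^sup>2"
  unfolding nearly_balanced_def by (drule spec[of _ l], drule spec[of _ x]) (simp add: abs_le_iff)

lemma nearly_balanced_lower:
  "nearly_balanced L W dr \<Longrightarrow> 1 \<le> l \<Longrightarrow> l < L \<Longrightarrow>
   (norm (W (Suc l) *v x))\<^sup>2 + (if Suc l = L then (norm x)\<^sup>2 else 0) - dr l * (norm x)\<^sup>2
     \<le> (norm (transpose (W l) *v x))\<^sup>2"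
  unfolding nearly_balanced_def by (drule spec[of _ l], drule spec[of _ x]) (simp add: abs_le_iff)

lemma nearly_balanced_gradient_step:
  fixes W :: "nat \<Rightarrow> real^'n::finite^'n" and Phi :: "real^'n^'n"
  assumes "nearly_balanced L W dr"
  shows "nearly_balanced L (\<lambda>j. W j - eta *\<^sub>R grad L Phi W j)
    (\<lambda>l. dr l + eta\<^sup>2 * ((norm (grad L Phi W l))\<^sup>2 + (norm (grad L Phi W (Suc l)))\<^sup>2))"
  unfolding nearly_balanced_def
proof (intro allI impI)
  fix l and x :: "real^'n"
  assume l: "1 \<le> l" "l < L"
  let ?G = "grad L Phi W"
  let ?D = "(norm (transpose (?G l) *v x))\<^sup>2 - (norm (?G (Suc l) *v x))\<^sup>2"
  have "(norm (transpose (?G l) *v x))\<^sup>2 \<le> (norm (?G l))\<^sup>2 * (norm x)\<^sup>2"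
    using norm_matrix_vector_le[of "transpose (?G l)" x]
    by (simp add: norm_transpose power_mult_distrib[symmetric] power_mono)
  moreover have "(norm (?G (Suc l) *v x))\<^sup>2 \<le> (norm (?G (Suc l)))\<^sup>2 * (norm x)\<^sup>2"
    using norm_matrix_vector_le[of "?G (Suc l)" x] by (simp add: power_mult_distrib[symmetric] power_mono)
  ultimately have "\<bar>?D\<bar> \<le> ((norm (?G l))\<^sup>2 + (norm (?G (Suc l)))\<^sup>2) * (norm x)\<^sup>2"
    by (simp add: abs_le_iff distrib_right) (smt (verit) zero_le_power2 mult_nonneg_nonneg)
  then have "\<bar>eta\<^sup>2 * ?D\<bar> \<le> eta\<^sup>2 * ((norm (?G l))\<^sup>2 + (norm (?G (Suc l)))\<^sup>2) * (norm x)\<^sup>2"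
    by (simp add: abs_mult mult.assoc mult_left_mono)
  moreover have "\<bar>(norm (transpose (W l) *v x))\<^sup>2 - (norm (W (Suc l) *v x))\<^sup>2
      - (if Suc l = L then (norm x)\<^sup>2 else 0)\<bar> \<le> dr l * (norm x)\<^sup>2"
    using assms l unfolding nearly_balanced_def by blast
  ultimately show "\<bar>(norm (transpose (W l - eta *\<^sub>R ?G l) *v x))\<^sup>2
      - (norm ((W (Suc l) - eta *\<^sub>R ?G (Suc l)) *v x))\<^sup>2 - (if Suc l = L then (norm x)\<^sup>2 else 0)\<bar>
    \<le> (dr l + eta\<^sup>2 * ((norm (?G l))\<^sup>2 + (norm (?G (Suc l)))\<^sup>2)) * (norm x)\<^sup>2"
    using balance_gradient_step[of l L W eta Phi x] l by (simp add: abs_le_iff algebra_simps)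
qed

section \<open>Elementary real inequalities\<close>

lemma one_plus_power_le_exp: "0 \<le> x \<Longrightarrow> (1 + x) ^ n \<le> exp (real n * x)"
  by (metis add.commute exp_ge_add_one_self exp_of_nat_mult power_mono add_nonneg_nonneg zero_le_one)

lemma power_add_le_twice:
  fixes r x :: real
  assumes "1 \<le> r" "0 \<le> x" "real n * x \<le> 1/2"
  shows "(r + x) ^ n \<le> 2 * r ^ n"
proof -
  have "x \<le> r * x"
    using mult_right_mono[of 1 r x] assms by simp
  then have "(r + x) ^ n \<le> (r * (1 + x)) ^ n"
    by (intro power_mono) (use assms in \<open>auto simp: algebra_simps\<close>)
  also have "\<dots> = r ^ n * (1 + x) ^ n"
    by (simp add: power_mult_distrib)
  also have "(1 + x) ^ n \<le> exp (real n * x)"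
    by (rule one_plus_power_le_exp) (use assms in auto)
  also have "exp (real n * x) \<le> exp (1/2)"
    using assms by simp
  also have "exp (1/2::real) \<le> 2"
    by (rule exp_half_le2)
  finally show ?thesis
    using assms by (simp add: mult.commute)
qed

lemma power_perturbation_le:
  fixes a rho :: real
  assumes "1 \<le> L" "0 \<le> a" "0 \<le> rho" "48 * real L * rho \<le> 1"
  shows "(1 + a + rho) ^ (L - 1) \<le> 9/8 * (1 + a - rho) ^ (L - 1)"
proof -
  have "rho \<le> real L * rho"
    using mult_right_mono[of 1 "real L" rho] assms by simp
  then have rho_small: "rho \<le> 1/48"
    using assms by simp
  have "0 \<le> rho * (1 + 3 * a - 3 * rho)"
    using assms rho_small by simp
  then have "1 + a + rho \<le> (1 + a - rho) * (1 + 3 * rho)"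
    by (simp add: algebra_simps)
  then have "(1 + a + rho) ^ (L - 1) \<le> (1 + a - rho) ^ (L - 1) * (1 + 3 * rho) ^ (L - 1)"
    by (metis power_mono power_mult_distrib add_nonneg_nonneg assms(2,3) zero_le_one)
  also have "(1 + 3 * rho) ^ (L - 1) \<le> exp (real (L - 1) * (3 * rho))"
    by (rule one_plus_power_le_exp) (use assms in simp)
  also have "\<dots> \<le> exp (1/16)"
    using assms mult_right_mono[of "real (L - 1)" "real L" "3 * rho"] by simp
  also have "exp (1/16::real) \<le> 9/8"
    using exp_bound_lemma[of "1/16::real"] by simp
  finally show ?thesis
    using rho_small assms(2) by (simp add: mult.commute mult_left_mono)
qed

lemma power_le_of_mult_power_le:
  fixes a b c :: real
  assumes "1 \<le> L" "0 \<le> b" "b \<le> 1 + a" "3 \<le> real L * c" "a * b ^ (L - 1) \<le> c"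
  shows "b ^ (L - 1) \<le> real L * c"
proof (cases "1 / real L \<le> a")
  case True
  have "(1 / real L) * b ^ (L - 1) \<le> c"
    using mult_right_mono[OF True, of "b ^ (L - 1)"] assms by simp
  then show ?thesis
    using assms(1) by (simp add: field_simps)
next
  case False
  have "b ^ (L - 1) \<le> (1 + 1 / real L) ^ (L - 1)"
    using False assms by (intro power_mono) auto
  also have "\<dots> \<le> exp (real (L - 1) * (1 / real L))"
    by (rule one_plus_power_le_exp) simp
  also have "\<dots> \<le> exp 1"
    using assms(1) by (simp add: field_simps)
  also have "\<dots> \<le> 3"
    by (rule exp_le)
  finally show ?thesis
    using assms(4) by simp
qed

text \<open>The expansion \<open>\<parallel>E - \<eta> F\<parallel>\<^sup>2 = e\<^sup>2 - 2\<eta>\<langle>E, F\<rangle> + \<eta>\<^sup>2\<parallel>F\<parallel>\<^sup>2\<close> for the first-order part \<open>F\<close> of a step.\<close>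
lemma gradient_step_quadratic_le:
  fixes e i f c eta :: real
  assumes "0 < eta" "eta \<le> 1/144" "47/48 * e\<^sup>2 \<le> i" "0 \<le> f" "f \<le> c * e" "0 \<le> e"
    and "eta * c\<^sup>2 \<le> 25/576"
  shows "e\<^sup>2 - 2 * eta * i + eta\<^sup>2 * f\<^sup>2 \<le> ((1 - 19/20 * eta) * e)\<^sup>2"
proof -
  have "f\<^sup>2 \<le> (c * e)\<^sup>2"
    using assms by (intro power_mono) auto
  then have "eta\<^sup>2 * f\<^sup>2 \<le> eta\<^sup>2 * (c * e)\<^sup>2"
    by (rule mult_left_mono) simp
  also have "\<dots> = (eta * c\<^sup>2) * (eta * e\<^sup>2)"
    by (simp add: power2_eq_square mult_ac)
  also have "\<dots> \<le> 25/576 * (eta * e\<^sup>2)"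
    using assms by (intro mult_right_mono) auto
  finally have quadratic: "eta\<^sup>2 * f\<^sup>2 \<le> 25/576 * (eta * e\<^sup>2)" .
  have linear: "47/24 * (eta * e\<^sup>2) \<le> 2 * eta * i"
    using mult_left_mono[OF assms(3), of "2 * eta"] assms(1) by (simp add: mult_ac)
  have "((1 - 19/20 * eta) * e)\<^sup>2 = e\<^sup>2 - 19/10 * (eta * e\<^sup>2) + 361/400 * (eta\<^sup>2 * e\<^sup>2)"
    by (simp add: power2_eq_square algebra_simps)
  moreover have "0 \<le> eta\<^sup>2 * e\<^sup>2" "0 \<le> eta * e\<^sup>2"
    using assms(1) by simp_all
  ultimately show ?thesis
    using quadratic linear by linarith
qed

lemma step_factor_sq_le:
  fixes e eta :: real
  assumes "0 \<le> eta" "eta \<le> 1/144"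
  shows "((1 - 13/40 * eta) * e)\<^sup>2 \<le> (1 - eta / 2) * e\<^sup>2"
proof -
  have "(1 - 13/40 * eta)\<^sup>2 = 1 - eta / 2 - eta * (3/20 - 169/1600 * eta)"
    by (simp add: power2_eq_square algebra_simps)
  moreover have "0 \<le> eta * (3/20 - 169/1600 * eta)"
    using assms by simp
  ultimately show ?thesis
    by (simp add: power_mult_distrib mult_right_mono)
qed

lemma geometric_sum_le:
  fixes eta :: real
  assumes "0 < eta" "eta \<le> 2"
  shows "(\<Sum>s<t. (1 - eta / 2) ^ s) \<le> 2 / eta"
proof -
  have "(\<Sum>s<t. (1 - eta / 2) ^ s) = (1 - (1 - eta / 2) ^ t) / (eta / 2)"
    using assms(1) by (simp add: sum_gp_strict)
  also have "\<dots> \<le> 1 / (eta / 2)"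
    using assms by (intro divide_right_mono) auto
  finally show ?thesis
    by simp
qed

lemma sum_adjacent_pairs_le:
  fixes g :: "nat \<Rightarrow> real"
  assumes "\<And>l. 0 \<le> g l"
  shows "(\<Sum>l\<in>{1..<L}. g l + g (Suc l)) \<le> 2 * (\<Sum>l\<in>{1..L}. g l)"
proof -
  have "(\<Sum>l\<in>{1..<L}. g l) \<le> (\<Sum>l\<in>{1..L}. g l)"
    using assms by (intro sum_mono2) auto
  moreover have "(\<Sum>l\<in>{1..<L}. g (Suc l)) \<le> (\<Sum>l\<in>{1..L}. g l)"
    using assms by (simp only: sum.shift_bounds_Suc_ivl[symmetric]) (intro sum_mono2, auto)
  ultimately show ?thesis
    by (simp add: sum.distrib)
qed

section \<open>Spectral consequences of near balancedness\<close>

locale nearly_balanced_factors =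
  fixes L :: nat and W :: "nat \<Rightarrow> real^'n::finite^'n" and dr :: "nat \<Rightarrow> real"
  assumes L_pos: "1 \<le> L"
    and balanced: "nearly_balanced L W dr"
    and drift_nonneg: "\<And>k. 0 \<le> dr k"
    and drift_small: "48 * real L * drift_tail L dr 1 \<le> 1"
begin

abbreviation rho where "rho \<equiv> drift_tail L dr 1"

abbreviation alpha where "alpha \<equiv> (opnorm (W L))\<^sup>2"

lemma rho_nonneg: "0 \<le> rho"
  by (rule drift_tail_nonneg[OF drift_nonneg])

lemma rho_le: "rho \<le> 1/48"
  using mult_right_mono[of 1 "real L" rho] L_pos rho_nonneg drift_small by simp

lemma drift_tail_le_rho: "1 \<le> l \<Longrightarrow> drift_tail L dr l \<le> rho"
  by (rule drift_tail_antimono[OF drift_nonneg])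

lemma sq_opnorm_factor_step:
  assumes "1 \<le> l" "l < L"
  shows "(opnorm (W l))\<^sup>2 \<le> (opnorm (W (Suc l)))\<^sup>2 + (if Suc l = L then 1 else 0) + dr l"
proof -
  have "(norm (transpose (W l) *v x))\<^sup>2
      \<le> ((opnorm (W (Suc l)))\<^sup>2 + (if Suc l = L then 1 else 0) + dr l) * (norm x)\<^sup>2" for x
    using nearly_balanced_upper[OF balanced assms, of x] sq_norm_le_opnorm[of "W (Suc l)" x]
    by (cases "Suc l = L") (simp_all add: algebra_simps)
  then have "(opnorm (transpose (W l)))\<^sup>2 \<le> (opnorm (W (Suc l)))\<^sup>2 + (if Suc l = L then 1 else 0) + dr l"
    by (intro sq_opnorm_le) (simp_all add: drift_nonneg add_nonneg_nonneg)
  then show ?thesis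
    by (simp add: opnorm_transpose)
qed

lemma sq_opnorm_factor_le:
  assumes "1 \<le> l" "l < L"
  shows "(opnorm (W l))\<^sup>2 \<le> 1 + alpha + drift_tail L dr l"
proof -
  have "l \<le> L - 1" using assms by simp
  then show ?thesis
  proof (induction rule: inc_induct)
    case base
    have "1 \<le> L - 1" using assms by simp
    then show ?case
      using sq_opnorm_factor_step[of "L - 1"] drift_tail_Suc[of "L - 1" L dr]
      by (simp add: drift_tail_def)
  next
    case (step n)
    then have "1 \<le> n" "Suc n < L" using assms by auto
    then show ?case
      using sq_opnorm_factor_step[of n] drift_tail_Suc[of n L dr] step.IH by simp
  qed
qed

lemma opnorm_factor_le:
  assumes "1 \<le> l" "l < L"
  shows "opnorm (W l) \<le> sqrt (1 + alpha + rho)"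
proof (rule real_le_rsqrt)
  show "(opnorm (W l))\<^sup>2 \<le> 1 + alpha + rho"
    using sq_opnorm_factor_le[OF assms] drift_tail_le_rho[OF assms(1)] by simp
qed

lemma sq_norm_transpose_factor_ge:
  assumes "1 \<le> l" "l < L"
  shows "(1 - drift_tail L dr l) * (norm x)\<^sup>2 \<le> (norm (transpose (W l) *v x))\<^sup>2"
proof -
  have "l \<le> L - 1" using assms by simp
  then show ?thesis
  proof (induction arbitrary: x rule: inc_induct)
    case base
    have "1 \<le> L - 1" using assms by simp
    then show ?case
      using nearly_balanced_lower[OF balanced, of "L - 1" x] drift_tail_Suc[of "L - 1" L dr]
      by (simp add: drift_tail_def algebra_simps) (use zero_le_power2[of "norm (W L *v x)"] in linarith)
  next
    case (step n)
    have "0 < 1 - drift_tail L dr (Suc n)"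
      using drift_tail_le_rho[of "Suc n"] rho_le by simp
    then have "(1 - drift_tail L dr (Suc n)) * (norm x)\<^sup>2 \<le> (norm (W (Suc n) *v x))\<^sup>2"
      by (rule sq_norm_ge_of_transpose) (rule step.IH)
    moreover have "1 \<le> n" "Suc n < L" using step assms by auto
    ultimately show ?case
      using nearly_balanced_lower[OF balanced, of n x] drift_tail_Suc[of n L dr]
      by (simp add: algebra_simps)
  qed
qed

lemma sq_norm_factor_ge:
  assumes "1 \<le> l" "l < L"
  shows "(1 - rho) * (norm x)\<^sup>2 \<le> (norm (W l *v x))\<^sup>2"
proof (rule sq_norm_ge_of_transpose)
  show "0 < 1 - rho"
    using rho_le by simp
  show "(1 - rho) * (norm y)\<^sup>2 \<le> (norm (transpose (W l) *v y))\<^sup>2" for y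
    using sq_norm_transpose_factor_ge[OF assms, of y]
      mult_right_mono[of "1 - rho" "1 - drift_tail L dr l" "(norm y)\<^sup>2"] drift_tail_le_rho[OF assms(1)]
    by simp
qed

lemma sq_norm_prefix_ge: "47/48 * (norm x)\<^sup>2 \<le> (norm (prodW W (L - 1) 1 *v x))\<^sup>2"
proof -
  have "1 - real (L - 1) * rho \<le> (1 - rho) ^ (L - 1)"
    using Bernoulli_inequality[of "- rho" "L - 1"] rho_le by simp
  moreover have "real (L - 1) * rho \<le> real L * rho"
    using rho_nonneg by (intro mult_right_mono) auto
  ultimately have "47/48 \<le> (1 - rho) ^ (L - 1)"
    using drift_small by linarith
  then have "47/48 * (norm x)\<^sup>2 \<le> (1 - rho) ^ (Suc (L - 1) - 1) * (norm x)\<^sup>2"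
    using mult_right_mono[of "47/48" "(1 - rho) ^ (L - 1)" "(norm x)\<^sup>2"] by simp
  also have "\<dots> \<le> (norm (prodW W (L - 1) 1 *v x))\<^sup>2"
    using rho_le sq_norm_factor_ge L_pos by (intro sq_norm_prodW_ge) auto
  finally show ?thesis .
qed

lemma one_plus_alpha_minus_rho_nonneg: "0 \<le> 1 + alpha - rho"
  using rho_le zero_le_power2[of "opnorm (W L)"] by linarith

lemma sq_norm_back_chain_ratio:
  assumes u: "norm u = 1" "norm (transpose (W L) *v u) = opnorm (W L)"
    and k: "1 \<le> k" "k < L"
  defines "v \<equiv> \<lambda>j. transpose (prodW W L j) *v u"
  shows "(1 + alpha - drift_tail L dr k) * (norm (v (Suc k)))\<^sup>2 \<le> (norm (v k))\<^sup>2"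
proof -
  have v_step: "v j = transpose (W j) *v v (Suc j)" if "j \<le> L" for j
    using prodW_bottom[OF that, of W] unfolding v_def
    by (simp add: matrix_transpose_mul matrix_vector_mul_assoc)
  have "k \<le> L - 1" using k by simp
  then show ?thesis
  proof (induction rule: inc_induct)
    case base
    have v_last: "v L = transpose (W L) *v u"
      by (simp add: v_def)
    have "alpha * (norm (v L))\<^sup>2 \<le> (norm (W L *v v L))\<^sup>2"
      by (rule sq_norm_ratio_transpose_image[OF v_last]) (simp add: u v_last)
    moreover have "1 \<le> L - 1" "Suc (L - 1) = L" using k by auto
    ultimately show ?case
      using nearly_balanced_lower[OF balanced, of "L - 1" "v L"] v_step[of "L - 1"]
        drift_tail_Suc[of "L - 1" L dr]
      by (simp add: drift_tail_def algebra_simps)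
  next
    case (step n)
    have "v (Suc n) = transpose (W (Suc n)) *v v (Suc (Suc n))"
      using v_step step by simp
    then have "(1 + alpha - drift_tail L dr (Suc n)) * (norm (v (Suc n)))\<^sup>2
        \<le> (norm (W (Suc n) *v v (Suc n)))\<^sup>2"
      by (rule sq_norm_ratio_transpose_image[OF _ step.IH])
    moreover have "1 \<le> n" "Suc n < L" using step k by auto
    ultimately show ?case
      using nearly_balanced_lower[OF balanced, of n "v (Suc n)"] v_step[of n]
        drift_tail_Suc[of n L dr]
      by (simp add: algebra_simps)
  qed
qed

lemma alpha_growth_le: "alpha * (1 + alpha - rho) ^ (L - 1) \<le> (opnorm (prodW W L 1))\<^sup>2"
proof -
  obtain u where u: "norm u = 1" "norm (transpose (W L) *v u) = opnorm (W L)"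
    using opnorm_attained[of "transpose (W L)"] by (auto simp: opnorm_transpose)
  define v where "v = (\<lambda>j. transpose (prodW W L j) *v u)"
  have "(1 + alpha - rho) ^ (L - k) * alpha \<le> (norm (v k))\<^sup>2" if "1 \<le> k" "k \<le> L" for k
    using that(2,1)
  proof (induction rule: inc_induct)
    case base
    then show ?case
      using u by (simp add: v_def)
  next
    case (step n)
    have "L - n = Suc (L - Suc n)"
      using step by simp
    then have "(1 + alpha - rho) ^ (L - n) * alpha = (1 + alpha - rho) * ((1 + alpha - rho) ^ (L - Suc n) * alpha)"
      by (simp only: power_Suc mult.assoc)
    also have "\<dots> \<le> (1 + alpha - rho) * (norm (v (Suc n)))\<^sup>2"
      using step by (intro mult_left_mono step.IH one_plus_alpha_minus_rho_nonneg) auto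
    also have "\<dots> \<le> (1 + alpha - drift_tail L dr n) * (norm (v (Suc n)))\<^sup>2"
      using drift_tail_le_rho[of n] step by (intro mult_right_mono) auto
    also have "\<dots> \<le> (norm (v n))\<^sup>2"
      unfolding v_def by (rule sq_norm_back_chain_ratio[OF u]) (use step in auto)
    finally show ?case .
  qed
  from this[of 1] have "alpha * (1 + alpha - rho) ^ (L - 1) \<le> (norm (v 1))\<^sup>2"
    using L_pos by (simp add: mult.commute)
  also have "norm (v 1) \<le> opnorm (prodW W L 1)"
    using opnorm_bound[of "transpose (prodW W L 1)" u] u(1) by (simp add: v_def opnorm_transpose)
  then have "(norm (v 1))\<^sup>2 \<le> (opnorm (prodW W L 1))\<^sup>2"
    by (rule power_mono) simp
  finally show ?thesis .
qed

lemma factor_power_bounds: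
  assumes "opnorm (prodW W L 1) \<le> phi" "9 \<le> real L * phi\<^sup>2"
  shows "opnorm (W L) * sqrt (1 + alpha + rho) ^ (L - 1) \<le> 9/8 * phi"
    and "(sqrt (1 + alpha + rho) ^ (L - 1))\<^sup>2 \<le> 9/8 * real L * phi\<^sup>2"
proof -
  have phi_nonneg: "0 \<le> phi"
    using assms(1) opnorm_nonneg order_trans by blast
  have growth: "alpha * (1 + alpha - rho) ^ (L - 1) \<le> phi\<^sup>2"
    using alpha_growth_le power_mono[OF assms(1) opnorm_nonneg] by (rule order_trans)
  have perturbation: "(1 + alpha + rho) ^ (L - 1) \<le> 9/8 * (1 + alpha - rho) ^ (L - 1)"
    by (rule power_perturbation_le[OF L_pos _ rho_nonneg drift_small]) simp
  have sqrt_power: "(sqrt (1 + alpha + rho) ^ (L - 1))\<^sup>2 = (1 + alpha + rho) ^ (L - 1)"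
    using rho_nonneg by (simp add: real_sqrt_power[symmetric])
  have "(opnorm (W L) * sqrt (1 + alpha + rho) ^ (L - 1))\<^sup>2 = alpha * (1 + alpha + rho) ^ (L - 1)"
    by (simp only: power_mult_distrib sqrt_power)
  also have "\<dots> \<le> alpha * (9/8 * (1 + alpha - rho) ^ (L - 1))"
    by (rule mult_left_mono[OF perturbation]) simp
  also have "\<dots> = 9/8 * (alpha * (1 + alpha - rho) ^ (L - 1))"
    by (simp only: mult_ac)
  also have "\<dots> \<le> 9/8 * phi\<^sup>2"
    using growth by simp
  also have "\<dots> \<le> 81/64 * phi\<^sup>2"
    by (rule mult_right_mono) simp_all
  also have "\<dots> = (9/8 * phi)\<^sup>2"
    by (simp add: power_mult_distrib power2_eq_square)
  finally show "opnorm (W L) * sqrt (1 + alpha + rho) ^ (L - 1) \<le> 9/8 * phi"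
    by (rule power2_le_imp_le) (simp add: phi_nonneg)
  have "(1 + alpha - rho) ^ (L - 1) \<le> real L * phi\<^sup>2"
    using growth assms(2) one_plus_alpha_minus_rho_nonneg rho_nonneg L_pos
    by (intro power_le_of_mult_power_le) auto
  then show "(sqrt (1 + alpha + rho) ^ (L - 1))\<^sup>2 \<le> 9/8 * real L * phi\<^sup>2"
    using perturbation sqrt_power by simp
qed

end

section \<open>One step of gradient descent\<close>

definition grad_weight :: "(nat \<Rightarrow> real^'n::finite^'n) \<Rightarrow> nat \<Rightarrow> nat \<Rightarrow> real" where
  "grad_weight W L l = opnorm (prodW W L (Suc l)) * opnorm (prodW W (l - 1) 1)"

lemma grad_weight_nonneg: "0 \<le> grad_weight W L l"
  by (simp add: grad_weight_def opnorm_nonneg)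

lemma norm_grad_le: "norm (grad L Phi W l) \<le> grad_weight W L l * norm (prodW W L 1 - Phi)"
proof -
  have "norm (grad L Phi W l) \<le> opnorm (transpose (prodW W L (Suc l))) * norm (prodW W L 1 - Phi)
      * opnorm (transpose (prodW W (l - 1) 1))"
    unfolding grad_def Suc_eq_plus1 by (rule norm_matrix_mult3_le)
  then show ?thesis
    by (simp add: grad_weight_def opnorm_transpose mult_ac)
qed

lemma opnorm_grad_le: "opnorm (grad L Phi W l) \<le> grad_weight W L l * norm (prodW W L 1 - Phi)"
  using norm_grad_le opnorm_le_norm order_trans by blast

lemma inner_first_order_eq:
  "inner (prodW W L 1 - Phi) (\<Sum>l\<in>S. prodW W L (Suc l) ** grad L Phi W l ** prodW W (l - 1) 1)
     = (\<Sum>l\<in>S. (norm (grad L Phi W l))\<^sup>2)"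
  unfolding inner_sum_right
proof (rule sum.cong[OF refl])
  fix l
  let ?E = "prodW W L 1 - Phi"
  have "inner ?E (prodW W L (Suc l) ** grad L Phi W l ** prodW W (l - 1) 1)
      = inner (?E ** transpose (prodW W (l - 1) 1)) (prodW W L (Suc l) ** grad L Phi W l)"
    by (rule inner_matrix_mult_right)
  also have "\<dots> = inner (transpose (prodW W L (Suc l)) ** (?E ** transpose (prodW W (l - 1) 1)))
      (grad L Phi W l)"
    by (rule inner_matrix_mult_left)
  also have "\<dots> = (norm (grad L Phi W l))\<^sup>2"
    by (simp add: grad_def matrix_mul_assoc power2_norm_eq_inner)
  finally show "inner ?E (prodW W L (Suc l) ** grad L Phi W l ** prodW W (l - 1) 1)
      = (norm (grad L Phi W l))\<^sup>2" .
qed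

locale bounded_factors =
  fixes L :: nat and W :: "nat \<Rightarrow> real^'n::finite^'n" and s r :: real
  assumes L_pos: "1 \<le> L" and s_nonneg: "0 \<le> s" and r_ge_1: "1 \<le> r"
    and opnorm_last_le: "opnorm (W L) \<le> s"
    and opnorm_hidden_le: "\<And>l. 1 \<le> l \<Longrightarrow> l < L \<Longrightarrow> opnorm (W l) \<le> r"
begin

lemma opnorm_middle_le:
  "1 \<le> l \<Longrightarrow> k \<le> L \<Longrightarrow> opnorm (prodW W (k - 1) l) \<le> r ^ (k - l)"
  using opnorm_prodW_le[of r l "k - 1" W] r_ge_1 opnorm_hidden_le by (cases k) simp_all

lemma opnorm_suffix_le:
  assumes "1 \<le> l" "l < L"
  shows "opnorm (prodW W L (Suc l)) \<le> s * r ^ (L - 1 - l)"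
proof -
  have "opnorm (prodW W L (Suc l)) \<le> opnorm (W L) * opnorm (prodW W (L - 1) (Suc l))"
    using assms prodW_top[of "Suc l" L W] by (simp add: opnorm_mult)
  also have "\<dots> \<le> s * r ^ (L - 1 - l)"
    using opnorm_middle_le[of "Suc l" L] assms s_nonneg
    by (intro mult_mono opnorm_last_le) (auto simp: opnorm_nonneg)
  finally show ?thesis .
qed

lemma grad_weight_hidden_le:
  assumes "1 \<le> l" "l < L"
  shows "grad_weight W L l \<le> s * r ^ (L - 1)"
proof -
  have "grad_weight W L l \<le> (s * r ^ (L - 1 - l)) * r ^ (l - 1)"
    unfolding grad_weight_def
    using opnorm_middle_le[of 1 l] assms s_nonneg r_ge_1
    by (intro mult_mono opnorm_suffix_le) (auto simp: opnorm_nonneg)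
  also have "\<dots> \<le> s * r ^ (L - 1)"
    using assms r_ge_1 s_nonneg
    by (simp add: mult.assoc flip: power_add) (intro mult_left_mono power_increasing, auto)
  finally show ?thesis .
qed

lemma grad_weight_last_le: "grad_weight W L L \<le> r ^ (L - 1)"
  using opnorm_middle_le[of 1 L] L_pos by (simp add: grad_weight_def prodW_empty)

end

locale descent_regime = bounded_factors L W s r
  for L :: nat and W :: "nat \<Rightarrow> real^'n::finite^'n" and s r :: real +
  fixes Phi :: "real^'n^'n" and eta phi :: real
  assumes prefix_lower: "\<And>x. 47/48 * (norm x)\<^sup>2 \<le> (norm (prodW W (L - 1) 1 *v x))\<^sup>2"
    and weight_hidden: "s * r ^ (L - 1) \<le> 9/8 * phi"
    and weight_last: "(r ^ (L - 1))\<^sup>2 \<le> 9/8 * real L * phi\<^sup>2"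
    and residual_le: "norm (prodW W L 1 - Phi) \<le> phi / 2"
    and eta_pos: "0 < eta"
    and eta_L2_phi4: "eta * real L ^ 2 * phi ^ 4 \<le> 1/144"
    and eta_L3_phi4: "eta * real L ^ 3 * phi ^ 4 \<le> 1/4"
    and phi_ge_1: "1 \<le> phi"
begin

abbreviation E where "E \<equiv> prodW W L 1 - Phi"

abbreviation G where "G \<equiv> grad L Phi W"

abbreviation V where "V \<equiv> \<lambda>j. W j - eta *\<^sub>R G j"

abbreviation first_order where
  "first_order \<equiv> \<Sum>l\<in>{1..L}. prodW W L (Suc l) ** G l ** prodW W (l - 1) 1"

lemma one_le_L_phi2: "1 \<le> real L * phi\<^sup>2"
  using mult_mono[of 1 "real L" 1 "phi\<^sup>2"] L_pos phi_ge_1 by (simp add: one_le_power)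

lemma eta_L_phi2: "eta * (real L * phi\<^sup>2) \<le> 1/144"
proof -
  have "eta * (real L * phi\<^sup>2) * 1 \<le> eta * (real L * phi\<^sup>2) * (real L * phi\<^sup>2)"
    using one_le_L_phi2 eta_pos by (intro mult_left_mono) auto
  also have "\<dots> = eta * real L ^ 2 * phi ^ 4"
    by (simp add: power2_eq_square power4_eq_xxxx mult_ac)
  finally show ?thesis
    using eta_L2_phi4 by simp
qed

lemma eta_le: "eta \<le> 1/144"
proof -
  have "eta * 1 \<le> eta * (real L * phi\<^sup>2)"
    using one_le_L_phi2 eta_pos by (intro mult_left_mono) auto
  then show ?thesis
    using eta_L_phi2 by simp
qed

lemma grad_weight_hidden_le_phi: "1 \<le> l \<Longrightarrow> l < L \<Longrightarrow> grad_weight W L l \<le> 9/8 * phi"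
  using grad_weight_hidden_le weight_hidden by (rule order_trans)

lemma norm_grad_hidden_le: "1 \<le> l \<Longrightarrow> l < L \<Longrightarrow> norm (G l) \<le> 9/8 * phi * norm E"
  by (meson grad_weight_hidden_le_phi mult_right_mono norm_ge_zero norm_grad_le order_trans)

lemma opnorm_grad_hidden_le: "1 \<le> l \<Longrightarrow> l < L \<Longrightarrow> opnorm (G l) \<le> 9/8 * phi * norm E"
  by (meson grad_weight_hidden_le_phi mult_right_mono norm_ge_zero opnorm_grad_le order_trans)

lemma opnorm_grad_last_le: "opnorm (G L) \<le> r ^ (L - 1) * norm E"
  by (meson grad_weight_last_le mult_right_mono norm_ge_zero opnorm_grad_le order_trans)

lemma sum_sq_grad_weight_le: "(\<Sum>l\<in>{1..L}. (grad_weight W L l)\<^sup>2) \<le> 5/2 * real L * phi\<^sup>2"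
proof -
  have "(\<Sum>l\<in>{1..<L}. (grad_weight W L l)\<^sup>2) \<le> (\<Sum>l\<in>{1..<L}. (9/8 * phi)\<^sup>2)"
    by (intro sum_mono power_mono grad_weight_hidden_le_phi) (auto simp: grad_weight_nonneg)
  also have "\<dots> = real (L - 1) * (81/64 * phi\<^sup>2)"
    by (simp add: power2_eq_square algebra_simps)
  also have "\<dots> \<le> real L * (81/64 * phi\<^sup>2)"
    by (intro mult_right_mono) auto
  finally have "(\<Sum>l\<in>{1..<L}. (grad_weight W L l)\<^sup>2) \<le> 81/64 * (real L * phi\<^sup>2)"
    by (simp add: mult_ac)
  moreover have "(grad_weight W L L)\<^sup>2 \<le> 9/8 * (real L * phi\<^sup>2)"
    using power_mono[OF grad_weight_last_le grad_weight_nonneg, of 2] weight_last by (simp add: mult_ac)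
  moreover have "{1..L} = insert L {1..<L}"
    using L_pos by auto
  ultimately show ?thesis
    using one_le_L_phi2 by (simp add: mult.assoc)
qed

lemma sum_sq_norm_grad_le: "(\<Sum>l\<in>{1..L}. (norm (G l))\<^sup>2) \<le> 5/2 * real L * phi\<^sup>2 * (norm E)\<^sup>2"
proof -
  have "(\<Sum>l\<in>{1..L}. (norm (G l))\<^sup>2) \<le> (\<Sum>l\<in>{1..L}. (grad_weight W L l)\<^sup>2 * (norm E)\<^sup>2)"
    by (intro sum_mono) (metis norm_ge_zero norm_grad_le power_mono power_mult_distrib)
  also have "\<dots> \<le> 5/2 * real L * phi\<^sup>2 * (norm E)\<^sup>2"
    unfolding sum_distrib_right[symmetric] by (rule mult_right_mono[OF sum_sq_grad_weight_le]) simp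
  finally show ?thesis .
qed

lemma norm_first_order_le: "norm first_order \<le> 5/2 * real L * phi\<^sup>2 * norm E"
proof -
  have "norm first_order \<le> (\<Sum>l\<in>{1..L}. norm (prodW W L (Suc l) ** G l ** prodW W (l - 1) 1))"
    by (rule norm_sum)
  also have "\<dots> \<le> (\<Sum>l\<in>{1..L}. (grad_weight W L l)\<^sup>2 * norm E)"
  proof (rule sum_mono)
    fix l
    have "norm (prodW W L (Suc l) ** G l ** prodW W (l - 1) 1) \<le> grad_weight W L l * norm (G l)"
      using norm_matrix_mult3_le[of "prodW W L (Suc l)" "G l" "prodW W (l - 1) 1"]
      by (simp add: grad_weight_def mult_ac)
    also have "\<dots> \<le> grad_weight W L l * (grad_weight W L l * norm E)"
      by (intro mult_left_mono norm_grad_le grad_weight_nonneg)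
    finally show "norm (prodW W L (Suc l) ** G l ** prodW W (l - 1) 1) \<le> (grad_weight W L l)\<^sup>2 * norm E"
      by (simp add: power2_eq_square mult_ac)
  qed
  also have "\<dots> \<le> 5/2 * real L * phi\<^sup>2 * norm E"
    unfolding sum_distrib_right[symmetric] by (rule mult_right_mono[OF sum_sq_grad_weight_le]) simp
  finally show ?thesis .
qed

lemma inner_first_order_ge: "47/48 * (norm E)\<^sup>2 \<le> inner E first_order"
proof -
  have "grad L Phi W L = E ** transpose (prodW W (L - 1) 1)"
    by (simp add: grad_def prodW_empty)
  then have "47/48 * (norm E)\<^sup>2 \<le> (norm (G L))\<^sup>2"
    using norm_sq_matrix_mult_transpose_ge[OF prefix_lower] by simp
  also have "\<dots> \<le> (\<Sum>l\<in>{1..L}. (norm (G l))\<^sup>2)"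
    using L_pos by (intro member_le_sum) auto
  also have "\<dots> = inner E first_order"
    by (rule inner_first_order_eq[symmetric])
  finally show ?thesis .
qed

lemma opnorm_step_hidden_le:
  assumes "1 \<le> j" "j < L"
  shows "opnorm (V j) \<le> r + eta * (9/8 * phi * norm E)"
proof -
  have "opnorm (V j) \<le> opnorm (W j) + eta * opnorm (G j)"
    using eta_pos by (intro opnorm_diff_scaleR) simp
  also have "\<dots> \<le> r + eta * (9/8 * phi * norm E)"
    using assms eta_pos by (intro add_mono mult_left_mono opnorm_hidden_le opnorm_grad_hidden_le) auto
  finally show ?thesis .
qed

lemma opnorm_step_last_le: "opnorm (V L) \<le> s + eta * (r ^ (L - 1) * norm E)"
proof -
  have "opnorm (V L) \<le> opnorm (W L) + eta * opnorm (G L)"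
    using eta_pos by (intro opnorm_diff_scaleR) simp
  also have "\<dots> \<le> s + eta * (r ^ (L - 1) * norm E)"
    using eta_pos by (intro add_mono mult_left_mono opnorm_last_le opnorm_grad_last_le) auto
  finally show ?thesis .
qed

lemma opnorm_step_suffix_le:
  assumes "1 \<le> k" "k < L"
  shows "opnorm (prodW V L (Suc k)) \<le> (s + eta * (r ^ (L - 1) * norm E)) * (2 * r ^ (L - 1 - k))"
proof -
  let ?x = "eta * (9/8 * phi * norm E)"
  have x_nonneg: "0 \<le> ?x"
    using eta_pos phi_ge_1 by simp
  have "real (L - 1 - k) * ?x \<le> real L * (eta * (9/8 * phi * (phi / 2)))"
    using residual_le eta_pos phi_ge_1 by (intro mult_mono mult_left_mono) auto
  also have "\<dots> = 9/16 * (eta * (real L * phi\<^sup>2))"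
    by (simp add: power2_eq_square)
  also have "\<dots> \<le> 1/2"
    using eta_L_phi2 by simp
  finally have x_small: "real (L - 1 - k) * ?x \<le> 1/2" .
  have "opnorm (prodW V L (Suc k)) \<le> opnorm (V L) * opnorm (prodW V (L - 1) (Suc k))"
    using assms prodW_top[of "Suc k" L V] by (simp add: opnorm_mult)
  also have "\<dots> \<le> (s + eta * (r ^ (L - 1) * norm E)) * (r + ?x) ^ (L - 1 - k)"
    using opnorm_prodW_le[of "r + ?x" "Suc k" "L - 1" V] opnorm_step_hidden_le x_nonneg r_ge_1 assms
      s_nonneg eta_pos
    by (intro mult_mono opnorm_step_last_le) (auto simp: opnorm_nonneg)
  also have "\<dots> \<le> (s + eta * (r ^ (L - 1) * norm E)) * (2 * r ^ (L - 1 - k))"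
    using power_add_le_twice[OF r_ge_1 x_nonneg x_small] s_nonneg eta_pos r_ge_1
    by (intro mult_left_mono) auto
  finally show ?thesis .
qed

lemma second_order_right_part_le:
  assumes "1 \<le> l" "l < k" "k \<le> L"
  shows "opnorm (prodW W (k - 1) (Suc l)) * norm (G l) * opnorm (prodW W (l - 1) 1)
    \<le> 9/8 * phi * norm E * r ^ (k - 2)"
proof -
  have "opnorm (prodW W (k - 1) (Suc l)) * norm (G l) * opnorm (prodW W (l - 1) 1)
      \<le> r ^ (k - Suc l) * (9/8 * phi * norm E) * r ^ (l - 1)"
    using assms opnorm_middle_le[of "Suc l" k] opnorm_middle_le[of 1 l] norm_grad_hidden_le[of l]
      r_ge_1 phi_ge_1
    by (intro mult_mono) (auto simp: opnorm_nonneg)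
  also have "\<dots> = 9/8 * phi * norm E * (r ^ (k - Suc l) * r ^ (l - 1))"
    by (simp only: mult_ac)
  also have "r ^ (k - Suc l) * r ^ (l - 1) = r ^ (k - 2)"
    using assms by (simp add: numeral_2_eq_2 flip: power_add)
  finally show ?thesis .
qed

lemma eta_sq_weight_residual_le: "eta * (r ^ (L - 1))\<^sup>2 * norm E \<le> phi / 8"
proof -
  have "eta * (r ^ (L - 1))\<^sup>2 * norm E \<le> eta * (9/8 * real L * phi\<^sup>2) * (phi / 2)"
    using eta_pos by (intro mult_mono mult_left_mono weight_last residual_le) auto
  also have "\<dots> = 9/16 * (eta * (real L * phi\<^sup>2)) * phi"
    by (simp add: algebra_simps)
  also have "\<dots> \<le> 9/16 * (1/144) * phi"
    using eta_L_phi2 phi_ge_1 by (intro mult_right_mono) auto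
  finally show ?thesis
    using phi_ge_1 by simp
qed

lemma second_order_left_part_last_le:
  "opnorm (prodW V L (Suc L)) * opnorm (G L) * r ^ (L - 2) \<le> 45/16 * real L * phi\<^sup>2 * norm E"
proof -
  have "opnorm (prodW V L (Suc L)) * opnorm (G L) \<le> r ^ (L - 1) * norm E"
    using opnorm_grad_last_le by (simp add: prodW_empty)
  moreover have "r ^ (L - 2) \<le> r ^ (L - 1)"
    using r_ge_1 by (intro power_increasing) auto
  ultimately have "opnorm (prodW V L (Suc L)) * opnorm (G L) * r ^ (L - 2) \<le> r ^ (L - 1) * norm E * r ^ (L - 1)"
    by (rule mult_mono) (use r_ge_1 in auto)
  also have "\<dots> = (r ^ (L - 1))\<^sup>2 * norm E"
    by (simp add: power2_eq_square)
  also have "\<dots> \<le> 9/8 * real L * phi\<^sup>2 * norm E"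
    by (intro mult_right_mono weight_last) simp
  also have "\<dots> \<le> 45/16 * real L * phi\<^sup>2 * norm E"
    by (intro mult_right_mono) auto
  finally show ?thesis .
qed

lemma second_order_left_part_hidden_le:
  assumes "1 \<le> k" "k < L"
  shows "opnorm (prodW V L (Suc k)) * opnorm (G k) * r ^ (k - 2) \<le> 45/16 * real L * phi\<^sup>2 * norm E"
proof -
  let ?b = "r ^ (L - 1)" and ?e = "norm E"
  have "opnorm (prodW V L (Suc k)) * opnorm (G k) * r ^ (k - 2)
      \<le> (s + eta * (?b * ?e)) * (2 * r ^ (L - 1 - k)) * (9/8 * phi * ?e) * r ^ (k - 2)"
    using assms s_nonneg eta_pos r_ge_1 phi_ge_1
    by (intro mult_mono opnorm_step_suffix_le opnorm_grad_hidden_le) (auto simp: opnorm_nonneg)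
  also have "\<dots> = 9/4 * phi * ?e * ((s + eta * (?b * ?e)) * (r ^ (L - 1 - k) * r ^ (k - 2)))"
    by (simp add: mult_ac)
  also have "\<dots> \<le> 9/4 * phi * ?e * ((s + eta * (?b * ?e)) * ?b)"
    using assms r_ge_1 s_nonneg eta_pos phi_ge_1
    by (intro mult_left_mono) (auto simp flip: power_add intro!: power_increasing)
  also have "\<dots> = 9/4 * phi * ?e * (s * ?b + eta * ?b\<^sup>2 * ?e)"
    by (simp add: power2_eq_square algebra_simps)
  also have "\<dots> \<le> 9/4 * phi * ?e * (9/8 * phi + phi / 8)"
    using weight_hidden eta_sq_weight_residual_le phi_ge_1 by (intro mult_left_mono add_mono) auto
  also have "\<dots> = 45/16 * 1 * phi\<^sup>2 * ?e"
    by (simp add: power2_eq_square)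
  also have "\<dots> \<le> 45/16 * real L * phi\<^sup>2 * ?e"
    using assms by (intro mult_right_mono mult_left_mono) auto
  finally show ?thesis .
qed

lemma second_order_term_le:
  assumes "1 \<le> l" "l < k" "k \<le> L"
  shows "opnorm (prodW V L (Suc k)) * opnorm (G k) *
      (opnorm (prodW W (k - 1) (Suc l)) * norm (G l) * opnorm (prodW W (l - 1) 1))
    \<le> 5 * real L * phi ^ 3 * (norm E)\<^sup>2"
proof -
  have left_part: "opnorm (prodW V L (Suc k)) * opnorm (G k) * r ^ (k - 2) \<le> 45/16 * real L * phi\<^sup>2 * norm E"
    using assms second_order_left_part_last_le second_order_left_part_hidden_le[of k] by (cases "k = L") auto
  have "opnorm (prodW V L (Suc k)) * opnorm (G k) *
      (opnorm (prodW W (k - 1) (Suc l)) * norm (G l) * opnorm (prodW W (l - 1) 1))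
    \<le> opnorm (prodW V L (Suc k)) * opnorm (G k) * (9/8 * phi * norm E * r ^ (k - 2))"
    by (intro mult_left_mono second_order_right_part_le[OF assms]) (simp add: opnorm_nonneg)
  also have "\<dots> = opnorm (prodW V L (Suc k)) * opnorm (G k) * r ^ (k - 2) * (9/8 * phi * norm E)"
    by (simp only: mult_ac)
  also have "\<dots> \<le> 45/16 * real L * phi\<^sup>2 * norm E * (9/8 * phi * norm E)"
    using phi_ge_1 by (intro mult_right_mono left_part) auto
  also have "\<dots> = 405/128 * (real L * phi ^ 3 * (norm E)\<^sup>2)"
    by (simp add: power2_eq_square power3_eq_cube)
  also have "\<dots> \<le> 5 * real L * phi ^ 3 * (norm E)\<^sup>2"
    using phi_ge_1 by simp
  finally show ?thesis .
qed

lemma opnorm_suffix_change_le: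
  assumes "1 \<le> l" "l \<le> L"
  shows "opnorm (prodW V L (Suc l) - prodW W L (Suc l)) * (norm (G l) * opnorm (prodW W (l - 1) 1))
    \<le> eta * (5 * real L ^ 2 * phi ^ 3 * (norm E)\<^sup>2)"
proof -
  let ?T = "\<lambda>k. opnorm (prodW V L (Suc k)) * opnorm (G k) * opnorm (prodW W (k - 1) (Suc l))"
  let ?low = "norm (G l) * opnorm (prodW W (l - 1) 1)"
  have "opnorm (prodW V L (Suc l) - prodW W L (Suc l))
      \<le> (\<Sum>k\<in>{Suc l..L}. opnorm (prodW V L (Suc k) ** (V k - W k) ** prodW W (k - 1) (Suc l)))"
    using assms by (simp only: prodW_telescope opnorm_sum)
  also have "\<dots> \<le> (\<Sum>k\<in>{Suc l..L}. eta * ?T k)"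
  proof (rule sum_mono)
    fix k
    have "opnorm (V k - W k) = eta * opnorm (G k)"
      using opnorm_scaleR[of "- eta" "G k"] eta_pos by simp
    then show "opnorm (prodW V L (Suc k) ** (V k - W k) ** prodW W (k - 1) (Suc l)) \<le> eta * ?T k"
      using opnorm_mult3[of "prodW V L (Suc k)" "V k - W k" "prodW W (k - 1) (Suc l)"]
      by (simp add: mult_ac)
  qed
  finally have "opnorm (prodW V L (Suc l) - prodW W L (Suc l)) * ?low \<le> (\<Sum>k\<in>{Suc l..L}. eta * ?T k) * ?low"
    by (rule mult_right_mono) (simp add: opnorm_nonneg)
  also have "\<dots> = eta * (\<Sum>k\<in>{Suc l..L}. ?T k * ?low)"
    by (simp add: sum_distrib_left sum_distrib_right mult_ac)
  also have "\<dots> \<le> eta * (\<Sum>k\<in>{Suc l..L}. 5 * real L * phi ^ 3 * (norm E)\<^sup>2)"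
  proof (intro mult_left_mono sum_mono)
    fix k assume "k \<in> {Suc l..L}"
    then show "?T k * ?low \<le> 5 * real L * phi ^ 3 * (norm E)\<^sup>2"
      using second_order_term_le[of l k] assms by (simp add: mult.assoc)
  qed (use eta_pos in simp)
  also have "\<dots> \<le> eta * (5 * real L ^ 2 * phi ^ 3 * (norm E)\<^sup>2)"
    using eta_pos phi_ge_1 by (intro mult_left_mono) (auto simp: power2_eq_square mult_right_mono)
  finally show ?thesis .
qed

lemma second_order_expansion:
  "prodW V L 1 - prodW W L 1 + eta *\<^sub>R first_order
    = (\<Sum>l\<in>{1..L}. (- eta) *\<^sub>R ((prodW V L (Suc l) - prodW W L (Suc l)) ** G l ** prodW W (l - 1) 1))"
proof -
  have telescope: "prodW V L 1 - prodW W L 1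
      = (\<Sum>l\<in>{1..L}. prodW V L (Suc l) ** (V l - W l) ** prodW W (l - 1) 1)"
    using L_pos by (intro prodW_telescope) auto
  show ?thesis
    unfolding telescope scaleR_sum_right sum.distrib[symmetric]
    by (intro sum.cong refl) (simp add: matrix_mul_minus_left matrix_mul_minus_right matrix_scalar_ac
        scalar_matrix_assoc[symmetric] matrix_diff_rdistrib scaleR_diff_right)
qed

lemma norm_second_order_le:
  "norm (prodW V L 1 - prodW W L 1 + eta *\<^sub>R first_order) \<le> 5/8 * eta * norm E"
proof -
  let ?D = "\<lambda>l. prodW V L (Suc l) - prodW W L (Suc l)"
  have "norm (prodW V L 1 - prodW W L 1 + eta *\<^sub>R first_order)
      \<le> (\<Sum>l\<in>{1..L}. norm ((- eta) *\<^sub>R (?D l ** G l ** prodW W (l - 1) 1)))"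
    unfolding second_order_expansion by (rule norm_sum)
  also have "\<dots> \<le> (\<Sum>l\<in>{1..L}. eta * (opnorm (?D l) * (norm (G l) * opnorm (prodW W (l - 1) 1))))"
  proof (rule sum_mono)
    fix l
    show "norm ((- eta) *\<^sub>R (?D l ** G l ** prodW W (l - 1) 1))
        \<le> eta * (opnorm (?D l) * (norm (G l) * opnorm (prodW W (l - 1) 1)))"
      using norm_matrix_mult3_le[of "?D l" "G l" "prodW W (l - 1) 1"] eta_pos
      by (simp add: mult_left_mono mult.assoc)
  qed
  also have "\<dots> \<le> (\<Sum>l\<in>{1..L}. eta * (eta * (5 * real L ^ 2 * phi ^ 3 * (norm E)\<^sup>2)))"
    using eta_pos opnorm_suffix_change_le by (intro sum_mono mult_left_mono) auto
  also have "\<dots> = 5 * (eta * real L ^ 3 * phi ^ 3 * norm E) * eta * norm E"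
    by (simp add: power2_eq_square power3_eq_cube mult_ac)
  also have "\<dots> \<le> 5 * (eta * real L ^ 3 * phi ^ 3 * (phi / 2)) * eta * norm E"
    using residual_le eta_pos phi_ge_1 by (intro mult_right_mono mult_left_mono) auto
  also have "\<dots> = 5/2 * (eta * real L ^ 3 * phi ^ 4) * eta * norm E"
    by (simp add: power3_eq_cube power4_eq_xxxx)
  also have "\<dots> \<le> 5/2 * (1/4) * eta * norm E"
    using eta_pos by (intro mult_right_mono mult_left_mono eta_L3_phi4) auto
  finally show ?thesis
    by simp
qed

lemma descent_step: "(norm (prodW V L 1 - Phi))\<^sup>2 \<le> (1 - eta / 2) * (norm E)\<^sup>2"
proof -
  let ?H = "prodW V L 1 - prodW W L 1 + eta *\<^sub>R first_order"
  have "eta * (5/2 * real L * phi\<^sup>2)\<^sup>2 = 25/4 * (eta * real L ^ 2 * phi ^ 4)"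
    by (simp add: power2_eq_square power4_eq_xxxx mult_ac)
  also have "\<dots> \<le> 25/576"
    using eta_L2_phi4 by linarith
  finally have "(norm (E - eta *\<^sub>R first_order))\<^sup>2 \<le> ((1 - 19/20 * eta) * norm E)\<^sup>2"
    unfolding norm_diff_scaleR_sq
    by (rule gradient_step_quadratic_le[OF eta_pos eta_le inner_first_order_ge norm_ge_zero
          norm_first_order_le norm_ge_zero])
  then have first_order_step: "norm (E - eta *\<^sub>R first_order) \<le> (1 - 19/20 * eta) * norm E"
    by (rule power2_le_imp_le) (use eta_le in simp)
  have regroup: "a - c = (b - c - d) + (a - b + d)" for a b c d :: "real^'n^'n"
    by simp
  have "prodW V L 1 - Phi = (E - eta *\<^sub>R first_order) + ?H"
    by (rule regroup)
  then have "norm (prodW V L 1 - Phi) \<le> norm (E - eta *\<^sub>R first_order) + norm ?H"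
    by (simp only: norm_triangle_ineq)
  also have "\<dots> \<le> (1 - 19/20 * eta) * norm E + 5/8 * eta * norm E"
    by (rule add_mono[OF first_order_step norm_second_order_le])
  also have "\<dots> = (1 - 13/40 * eta) * norm E"
    by (simp only: algebra_simps)
  finally have "(norm (prodW V L 1 - Phi))\<^sup>2 \<le> ((1 - 13/40 * eta) * norm E)\<^sup>2"
    by (rule power_mono) simp
  also have "\<dots> \<le> (1 - eta / 2) * (norm E)\<^sup>2"
    using eta_pos eta_le by (intro step_factor_sq_le) auto
  finally show ?thesis .
qed

end

section \<open>Linear convergence from the zero-asymmetric initialization\<close>

locale zero_asymmetric_gd =
  fixes Phi :: "real^'n::finite^'n" and L :: nat and eta phi :: real
  assumes L_pos: "1 \<le> L"
    and eta_pos: "0 < eta"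
    and phi_def: "phi = max (2 * frob Phi) (max (3 / sqrt (real L)) 1)"
    and eta_bound: "eta \<le> min (1 / (4 * real L ^ 3 * phi ^ 6)) (1 / (144 * real L ^ 2 * phi ^ 4))"
begin

abbreviation residual where "residual t \<equiv> prodW (gd eta L Phi t) L 1 - Phi"

abbreviation grad_sq_sum where
  "grad_sq_sum t \<equiv> \<Sum>l\<in>{1..L}. (norm (grad L Phi (gd eta L Phi t) l))\<^sup>2"

definition drift :: "nat \<Rightarrow> nat \<Rightarrow> real" where
  "drift t l = eta\<^sup>2 * (\<Sum>s<t. (norm (grad L Phi (gd eta L Phi s) l))\<^sup>2
                            + (norm (grad L Phi (gd eta L Phi s) (Suc l)))\<^sup>2)"

lemma phi_ge_1: "1 \<le> phi"
  using phi_def by simp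

lemma two_norm_Phi_le_phi: "2 * norm Phi \<le> phi"
  using phi_def by (simp add: frob_eq_norm)

lemma nine_le_L_phi2: "9 \<le> real L * phi\<^sup>2"
proof -
  have "3 / sqrt (real L) \<le> phi"
    using phi_def by simp
  then have "3 \<le> phi * sqrt (real L)"
    using L_pos by (simp add: divide_le_eq)
  then have "3\<^sup>2 \<le> (phi * sqrt (real L))\<^sup>2"
    by (rule power_mono) simp
  then show ?thesis
    by (simp add: power_mult_distrib mult.commute)
qed

lemma eta_L2_phi4: "eta * real L ^ 2 * phi ^ 4 \<le> 1/144"
  using eta_bound L_pos phi_ge_1 by (simp add: le_divide_eq mult_ac)

lemma eta_L3_phi4: "eta * real L ^ 3 * phi ^ 4 \<le> 1/4"
proof -
  have "eta * (4 * real L ^ 3 * phi ^ 4) \<le> eta * (4 * real L ^ 3 * phi ^ 6)"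
    using eta_pos phi_ge_1 by (intro mult_left_mono power_increasing) auto
  also have "\<dots> \<le> 1"
    using eta_bound L_pos phi_ge_1 by (simp add: le_divide_eq mult_ac)
  finally show ?thesis
    by (simp add: mult_ac)
qed

lemma eta_le_1: "eta \<le> 1"
proof -
  have "1 \<le> real L ^ 2 * phi ^ 4"
    using mult_mono[of 1 "real L ^ 2" 1 "phi ^ 4"] L_pos phi_ge_1 by (simp add: one_le_power)
  then have "eta * 1 \<le> eta * (real L ^ 2 * phi ^ 4)"
    using eta_pos by (intro mult_left_mono) auto
  then show ?thesis
    using eta_L2_phi4 by (simp add: mult.assoc)
qed

lemma residual_0: "residual 0 = - Phi"
  using prodW_top[of 1 L "gd eta L Phi 0"] L_pos by simp

lemma nearly_balanced_gd: "nearly_balanced L (gd eta L Phi t) (drift t)"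
proof (induction t)
  case 0
  show ?case
    unfolding nearly_balanced_def drift_def by auto
next
  case (Suc t)
  have "drift (Suc t) = (\<lambda>l. drift t l + eta\<^sup>2 * ((norm (grad L Phi (gd eta L Phi t) l))\<^sup>2
                            + (norm (grad L Phi (gd eta L Phi t) (Suc l)))\<^sup>2))"
    by (simp add: drift_def algebra_simps fun_eq_iff)
  then show ?case
    using nearly_balanced_gradient_step[OF Suc.IH] by simp
qed

lemma gd_step_bounds:
  assumes drift_small: "48 * real L * drift_tail L (drift t) 1 \<le> 1"
    and residual_small: "norm (residual t) \<le> norm Phi"
  shows "grad_sq_sum t \<le> 5/2 * real L * phi\<^sup>2 * (norm (residual t))\<^sup>2"
    and "(norm (residual (Suc t)))\<^sup>2 \<le> (1 - eta / 2) * (norm (residual t))\<^sup>2"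
proof -
  let ?W = "gd eta L Phi t"
  interpret balanced: nearly_balanced_factors L ?W "drift t"
    using L_pos nearly_balanced_gd drift_small by unfold_locales (auto simp: drift_def sum_nonneg)
  let ?r = "sqrt (1 + balanced.alpha + balanced.rho)"
  have "opnorm (prodW ?W L 1) \<le> norm (residual t) + norm Phi"
    using opnorm_le_norm[of "prodW ?W L 1"] norm_triangle_sub[of "prodW ?W L 1" Phi] by simp
  then have end_to_end: "opnorm (prodW ?W L 1) \<le> phi"
    using residual_small two_norm_Phi_le_phi by simp
  interpret descent: descent_regime L ?W "opnorm (?W L)" ?r Phi eta phi
  proof unfold_locales
    show "1 \<le> ?r"
      using balanced.rho_nonneg by simp
    show "47/48 * (norm x)\<^sup>2 \<le> (norm (prodW ?W (L - 1) 1 *v x))\<^sup>2" for x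
      by (rule balanced.sq_norm_prefix_ge)
    show "opnorm (?W L) * ?r ^ (L - 1) \<le> 9/8 * phi" "(?r ^ (L - 1))\<^sup>2 \<le> 9/8 * real L * phi\<^sup>2"
      using balanced.factor_power_bounds[OF end_to_end nine_le_L_phi2] by simp_all
  qed (use L_pos opnorm_nonneg balanced.opnorm_factor_le residual_small two_norm_Phi_le_phi eta_pos
      eta_L2_phi4 eta_L3_phi4 phi_ge_1 in auto)
  show "grad_sq_sum t \<le> 5/2 * real L * phi\<^sup>2 * (norm (residual t))\<^sup>2"
    by (rule descent.sum_sq_norm_grad_le)
  show "(norm (residual (Suc t)))\<^sup>2 \<le> (1 - eta / 2) * (norm (residual t))\<^sup>2"
    using descent.descent_step by simp
qed

lemma drift_tail_bound:
  assumes "\<And>s. s < t \<Longrightarrow> (norm (residual s))\<^sup>2 \<le> (1 - eta / 2) ^ s * (norm Phi)\<^sup>2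
      \<and> grad_sq_sum s \<le> 5/2 * real L * phi\<^sup>2 * (norm (residual s))\<^sup>2"
  shows "48 * real L * drift_tail L (drift t) 1 \<le> 1"
proof -
  let ?g = "\<lambda>s l. (norm (grad L Phi (gd eta L Phi s) l))\<^sup>2"
  have "drift_tail L (drift t) 1 = eta\<^sup>2 * (\<Sum>s<t. \<Sum>l\<in>{1..<L}. ?g s l + ?g s (Suc l))"
    unfolding drift_tail_def drift_def by (simp add: sum_distrib_left) (rule sum.swap)
  also have "\<dots> \<le> eta\<^sup>2 * (\<Sum>s<t. 5 * real L * phi\<^sup>2 * ((1 - eta / 2) ^ s * (norm Phi)\<^sup>2))"
  proof (intro mult_left_mono sum_mono)
    fix s assume "s \<in> {..<t}"
    then have "(\<Sum>l\<in>{1..<L}. ?g s l + ?g s (Suc l)) \<le> 2 * (5/2 * real L * phi\<^sup>2 * (norm (residual s))\<^sup>2)"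
      using sum_adjacent_pairs_le[of "?g s" L] assms by fastforce
    also have "\<dots> \<le> 5 * real L * phi\<^sup>2 * ((1 - eta / 2) ^ s * (norm Phi)\<^sup>2)"
      using assms \<open>s \<in> {..<t}\<close> by (simp add: mult_left_mono)
    finally show "(\<Sum>l\<in>{1..<L}. ?g s l + ?g s (Suc l)) \<le> 5 * real L * phi\<^sup>2 * ((1 - eta / 2) ^ s * (norm Phi)\<^sup>2)" .
  qed simp
  also have "\<dots> = 5 * eta\<^sup>2 * real L * phi\<^sup>2 * (norm Phi)\<^sup>2 * (\<Sum>s<t. (1 - eta / 2) ^ s)"
    by (simp add: sum_distrib_left mult_ac)
  also have "\<dots> \<le> 5 * eta\<^sup>2 * real L * phi\<^sup>2 * (norm Phi)\<^sup>2 * (2 / eta)"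
    using eta_pos eta_le_1 by (intro mult_left_mono geometric_sum_le) auto
  also have "\<dots> = 10 * eta * real L * phi\<^sup>2 * (norm Phi)\<^sup>2"
    using eta_pos by (simp add: power2_eq_square)
  also have "\<dots> \<le> 10 * eta * real L * phi\<^sup>2 * (phi\<^sup>2 / 4)"
    using two_norm_Phi_le_phi eta_pos power_mono[OF two_norm_Phi_le_phi, of 2] by (intro mult_left_mono) auto
  finally have "48 * real L * drift_tail L (drift t) 1 \<le> 120 * (eta * real L ^ 2 * phi ^ 4)"
    using L_pos by (simp add: power2_eq_square power4_eq_xxxx mult_ac)
  then show ?thesis
    using eta_L2_phi4 by linarith
qed

lemma residual_and_gradient_bounds:
  "(norm (residual t))\<^sup>2 \<le> (1 - eta / 2) ^ t * (norm Phi)\<^sup>2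
     \<and> grad_sq_sum t \<le> 5/2 * real L * phi\<^sup>2 * (norm (residual t))\<^sup>2"
proof (induction t rule: less_induct)
  case (less t)
  have residual_small: "norm (residual s) \<le> norm Phi"
    if "(norm (residual s))\<^sup>2 \<le> (1 - eta / 2) ^ s * (norm Phi)\<^sup>2" for s
  proof -
    have "(1 - eta / 2) ^ s * (norm Phi)\<^sup>2 \<le> 1 * (norm Phi)\<^sup>2"
      using eta_pos eta_le_1 by (intro mult_right_mono power_le_one) auto
    then have "(norm (residual s))\<^sup>2 \<le> (norm Phi)\<^sup>2"
      using that by linarith
    then show ?thesis
      by (rule power2_le_imp_le) simp
  qed
  have rate: "(norm (residual t))\<^sup>2 \<le> (1 - eta / 2) ^ t * (norm Phi)\<^sup>2"
  proof (cases t)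
    case (Suc s)
    have rate_s: "(norm (residual s))\<^sup>2 \<le> (1 - eta / 2) ^ s * (norm Phi)\<^sup>2"
      using less.IH[of s] Suc by simp
    have "48 * real L * drift_tail L (drift s) 1 \<le> 1"
      using less.IH Suc by (intro drift_tail_bound) simp
    then have "(norm (residual (Suc s)))\<^sup>2 \<le> (1 - eta / 2) * (norm (residual s))\<^sup>2"
      by (rule gd_step_bounds(2)[OF _ residual_small[OF rate_s]])
    also have "\<dots> \<le> (1 - eta / 2) * ((1 - eta / 2) ^ s * (norm Phi)\<^sup>2)"
      using eta_le_1 by (intro mult_left_mono rate_s) auto
    finally show ?thesis
      using Suc by (simp add: mult_ac)
  qed (use residual_0 in simp)
  moreover have "48 * real L * drift_tail L (drift t) 1 \<le> 1"
    using less.IH by (intro drift_tail_bound) simp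
  ultimately show ?case
    using gd_step_bounds(1) residual_small by blast
qed

end

theorem theorem2:
  fixes Phi :: "real ^ 'n::finite ^ 'n" and L :: nat and eta phi :: real
  assumes "L \<ge> 1"
    and "eta > 0"
    and "phi = max (2 * frob Phi) (max (3 / sqrt (real L)) 1)"
    and "eta \<le> min (1 / (4 * real L ^ 3 * phi ^ 6)) (1 / (144 * real L ^ 2 * phi ^ 4))"
  shows "\<forall>t. loss L Phi (gd eta L Phi t) \<le> (1 - eta / 2) ^ t * loss L Phi (gd eta L Phi 0)"
proof
  fix t
  interpret zero_asymmetric_gd Phi L eta phi
    using assms by unfold_locales auto
  show "loss L Phi (gd eta L Phi t) \<le> (1 - eta / 2) ^ t * loss L Phi (gd eta L Phi 0)"
    using residual_and_gradient_bounds[of t] residual_0 by (simp add: loss_def frob_eq_norm)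
qed

end
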